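(* There is a finite alphabet $\Sigma$ and a binary existential FO formula $\varphi(x_1,x_2\,;\,y)=\exists\bar z\,\psi(x_1,x_2,y,\bar z)$ (with $\psi$ quantifier-free) with one parameter variable $y$ such that there is no consistent formula learner for $\varphi$ whose running time is sublinear in the length of the string.
   Context: Strings as structures: a string $B=a_1\cdots a_n\in\Sigma^*$ is the structure with universe $U(B)=\{1,\ldots,n\}$, the natural order $<$, and unary relations $R_a$ ($a\in\Sigma$) of $a$-labelled positions (no successor relation). In $\varphi(x_1,x_2;y)$, $x_1,x_2$ are instance variables and $y$ is the parameter variable. For $v\in U(B)$, $[\![\varphi(x_1,x_2;v)]\!]^B(u_1,u_2)=1$ iff $B\models\varphi(u_1,u_2;v)$, else $0$. A training set over $B$ is a finite $T\subseteq U(B)^2\times\{0,1\}$; a parameter tuple is consistent with a formula, $B$, $T$ if the corresponding hypothesis agrees with all labels in $T$; $T$ is $\varphi$-consistent if some $v$ is consistent with $\varphi,B,T$. Local access: the algorithm receives $T$, initially holds only positions occurring in $T$, and may query labels of and retrieve successor/predecessor of positions it holds, each at unit cost. A consistent formula learner for $\varphi$ is a local-access algorithm for which there are numbers $q',\ell'$ such that on every string $B$ and every $\varphi$-consistent $T$ it outputs an MSO formula $\varphi'(x_1,x_2;\bar y')$ of quantifier rank at most $q'$ with $|\bar y'|\le\ell'$ and a tuple $\bar v'$ consistent with $\varphi',B,T$. Sublinear running time: for every fixed bound $t$ on the training set size there is $f_t$ with $f_t(n)/n\to0$ bounding the running time on strings of length $n$ with training sets of size at most $t$. *)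

theory Defs
  imports Complex_Main
begin

text \<open>A string is a list w; its universe is {1..length w}, position p carries
  letter w ! (p - 1).\<close>

datatype mso =
    Less nat nat
  | Eq nat nat
  | Lab nat nat
  | Mem nat nat
  | Neg mso
  | Conj mso mso
  | Ex1 nat mso
  | Ex2 nat mso

definition univ :: "nat list \<Rightarrow> nat set" where
  "univ w = {1..length w}"

fun sat :: "nat list \<Rightarrow> (nat \<Rightarrow> nat) \<Rightarrow> (nat \<Rightarrow> nat set) \<Rightarrow> mso \<Rightarrow> bool" where
  "sat w I J (Less x y) = (I x < I y)"
| "sat w I J (Eq x y) = (I x = I y)"
| "sat w I J (Lab a x) = (I x \<in> univ w \<and> w ! (I x - 1) = a)"
| "sat w I J (Mem x X) = (I x \<in> J X)"
| "sat w I J (Neg f) = (\<not> sat w I J f)"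
| "sat w I J (Conj f g) = (sat w I J f \<and> sat w I J g)"
| "sat w I J (Ex1 x f) = (\<exists>u\<in>univ w. sat w (I(x := u)) J f)"
| "sat w I J (Ex2 X f) = (\<exists>S. S \<subseteq> univ w \<and> sat w I (J(X := S)) f)"

fun qrank :: "mso \<Rightarrow> nat" where
  "qrank (Neg f) = qrank f"
| "qrank (Conj f g) = max (qrank f) (qrank g)"
| "qrank (Ex1 x f) = Suc (qrank f)"
| "qrank (Ex2 X f) = Suc (qrank f)"
| "qrank _ = 0"

fun fv1 :: "mso \<Rightarrow> nat set" where
  "fv1 (Less x y) = {x, y}"
| "fv1 (Eq x y) = {x, y}"
| "fv1 (Lab a x) = {x}"
| "fv1 (Mem x X) = {x}"
| "fv1 (Neg f) = fv1 f"
| "fv1 (Conj f g) = fv1 f \<union> fv1 g"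
| "fv1 (Ex1 x f) = fv1 f - {x}"
| "fv1 (Ex2 X f) = fv1 f"

fun fv2 :: "mso \<Rightarrow> nat set" where
  "fv2 (Mem x X) = {X}"
| "fv2 (Neg f) = fv2 f"
| "fv2 (Conj f g) = fv2 f \<union> fv2 g"
| "fv2 (Ex1 x f) = fv2 f"
| "fv2 (Ex2 X f) = fv2 f - {X}"
| "fv2 _ = {}"

fun qf_fo :: "mso \<Rightarrow> bool" where
  "qf_fo (Less x y) = True"
| "qf_fo (Eq x y) = True"
| "qf_fo (Lab a x) = True"
| "qf_fo (Mem x X) = False"
| "qf_fo (Neg f) = qf_fo f"
| "qf_fo (Conj f g) = (qf_fo f \<and> qf_fo g)"
| "qf_fo (Ex1 x f) = False"
| "qf_fo (Ex2 X f) = False"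

text \<open>Variable convention for a formula phi(x1,x2; y1..yl):
  variable 0 is x1, variable 1 is x2, variable (i+2) is the parameter y_(i+1).\<close>
definition has_vars :: "mso \<Rightarrow> nat \<Rightarrow> bool" where
  "has_vars f l \<longleftrightarrow> fv1 f \<subseteq> {..<l + 2} \<and> fv2 f = {}"

definition existential_fo_1param :: "mso \<Rightarrow> bool" where
  "existential_fo_1param f \<longleftrightarrow>
     (\<exists>zs psi. qf_fo psi \<and> f = foldr Ex1 zs psi) \<and> has_vars f 1"

definition assign :: "nat \<Rightarrow> nat \<Rightarrow> nat list \<Rightarrow> nat \<Rightarrow> nat" where
  "assign u1 u2 vs i =
     (if i = 0 then u1 else if i = 1 then u2
      else if i - 2 < length vs then vs ! (i - 2) else 1)"

definition hyp :: "nat list \<Rightarrow> mso \<Rightarrow> nat list \<Rightarrow> nat \<Rightarrow> nat \<Rightarrow> bool" where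
  "hyp w f vs u1 u2 = sat w (assign u1 u2 vs) (\<lambda>_. {}) f"

text \<open>Training sets: finite subsets of U(B)^2 x {0,1} (label 1 = True).\<close>
definition training_set :: "nat list \<Rightarrow> (nat \<times> nat \<times> bool) set \<Rightarrow> bool" where
  "training_set w T \<longleftrightarrow> finite T \<and> T \<subseteq> univ w \<times> univ w \<times> UNIV"

definition consistent :: "nat list \<Rightarrow> mso \<Rightarrow> nat list \<Rightarrow> (nat \<times> nat \<times> bool) set \<Rightarrow> bool" where
  "consistent w f vs T \<longleftrightarrow> set vs \<subseteq> univ w \<and> (\<forall>(u1, u2, b) \<in> T. b = hyp w f vs u1 u2)"

definition phi_consistent :: "nat list \<Rightarrow> mso \<Rightarrow> nat \<Rightarrow> (nat \<times> nat \<times> bool) set \<Rightarrow> bool" where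
  "phi_consistent w f l T \<longleftrightarrow> (\<exists>vs. length vs = l \<and> consistent w f vs T)"

datatype query = QLabel nat | QSucc nat | QPred nat

datatype answer = ALabel nat | APos "nat option"

datatype action = Ask query | Output mso "nat list"

text \<open>A (deterministic, adaptive) local-access algorithm: given the training set
  and the history of answers so far, it either asks a query or outputs a formula
  together with a parameter tuple.\<close>
type_synonym algorithm = "(nat \<times> nat \<times> bool) set \<Rightarrow> answer list \<Rightarrow> action"

fun qpos :: "query \<Rightarrow> nat" where
  "qpos (QLabel p) = p" | "qpos (QSucc p) = p" | "qpos (QPred p) = p"

fun answer_of :: "nat list \<Rightarrow> query \<Rightarrow> answer" where
  "answer_of w (QLabel p) = ALabel (w ! (p - 1))"
| "answer_of w (QSucc p) = APos (if p < length w then Some (Suc p) else None)"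
| "answer_of w (QPred p) = APos (if 1 < p then Some (p - 1) else None)"

definition held :: "(nat \<times> nat \<times> bool) set \<Rightarrow> answer list \<Rightarrow> nat set" where
  "held T h = {u. \<exists>v b. (u, v, b) \<in> T \<or> (v, u, b) \<in> T} \<union> {p. APos (Some p) \<in> set h}"

definition valid_run :: "algorithm \<Rightarrow> nat list \<Rightarrow> (nat \<times> nat \<times> bool) set \<Rightarrow> answer list \<Rightarrow> bool" where
  "valid_run A w T h \<longleftrightarrow>
     (\<forall>i < length h. \<exists>q. A T (take i h) = Ask q \<and> qpos q \<in> held T (take i h)
                         \<and> h ! i = answer_of w q)"

text \<open>A halts on (w,T) after exactly length h unit-cost queries with output (f, vs).\<close>
definition run_outputs :: "algorithm \<Rightarrow> nat list \<Rightarrow> (nat \<times> nat \<times> bool) set \<Rightarrow> answer list \<Rightarrow> mso \<Rightarrow> nat list \<Rightarrow> bool" where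
  "run_outputs A w T h f vs \<longleftrightarrow> valid_run A w T h \<and> A T h = Output f vs"

definition consistent_formula_learner :: "nat set \<Rightarrow> mso \<Rightarrow> algorithm \<Rightarrow> bool" where
  "consistent_formula_learner \<Sigma> \<phi> A \<longleftrightarrow>
     (\<exists>q' l'. \<forall>w T. set w \<subseteq> \<Sigma> \<and> training_set w T \<and> phi_consistent w \<phi> 1 T \<longrightarrow>
        (\<exists>h f vs. run_outputs A w T h f vs \<and> qrank f \<le> q' \<and> length vs \<le> l'
                  \<and> has_vars f (length vs) \<and> consistent w f vs T))"

definition sublinear_time :: "nat set \<Rightarrow> mso \<Rightarrow> algorithm \<Rightarrow> bool" where
  "sublinear_time \<Sigma> \<phi> A \<longleftrightarrow>
     (\<forall>t::nat. \<exists>g::nat \<Rightarrow> real. (\<lambda>n. g n / real n) \<longlonglongrightarrow> 0 \<and>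
        (\<forall>w T. set w \<subseteq> \<Sigma> \<and> training_set w T \<and> phi_consistent w \<phi> 1 T \<and> card T \<le> t \<longrightarrow>
           (\<exists>h f vs. run_outputs A w T h f vs \<and> real (length h) \<le> g (length w))))"

end

theory Submission
  imports Defs
begin

text \<open>Take \<open>\<phi>(x1, x2; y) = \<exists>z. x1 < z < x2 \<and> R\<^sub>1 z \<and> z \<noteq> y\<close> over the alphabet \<open>{0, 1}\<close>, and
  words whose letters 1 sit exactly at the positions \<open>\<equiv> r (mod D)\<close>. The training set consists of
  \<open>K\<close> groups, each with a positive pair of positions enclosing one letter 1 and a negative pair
  whose interval contains a 1 only if \<open>r\<close> lies in the stripe of residues of that group; the
  parameter must then point to that 1. A learner reading fewer than half of a stripe's width of
  labels only sees zeros for most residues \<open>r\<close>, so it behaves as on the all-zero word and its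
  output does not depend on \<open>r\<close>. Choose a group whose neighbourhood avoids the output parameters
  and a residue \<open>r\<close> of its stripe that was never read. Around that group, the positive and the
  negative pair differ only in the lengths of some runs of zeros and of some runs of periods,
  all by multiples of \<open>N!\<close>, where \<open>N\<close> bounds the number of Ehrenfeucht-Fraisse classes of rank \<open>q'\<close>.
  By composition and pumping of Ehrenfeucht-Fraisse equivalence the output formula cannot
  separate the two pairs, contradicting consistency.\<close>

section \<open>Ehrenfeucht-Fraisse equivalence of annotated words\<close>

lemma rel_set_mono_on:
  "rel_set R A B \<Longrightarrow> (\<And>x y. x \<in> A \<Longrightarrow> y \<in> B \<Longrightarrow> R x y \<Longrightarrow> S x y) \<Longrightarrow> rel_set S A B"
  unfolding rel_set_def by blast

lemma rel_set_swap: "rel_set R A B \<Longrightarrow> rel_set (\<lambda>y x. R x y) B A"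
  unfolding rel_set_def by blast

lemma rel_set_OO_on: "rel_set R A B \<Longrightarrow> rel_set S B C \<Longrightarrow> rel_set (R OO S) A C"
  unfolding rel_set_def by blast

lemma rel_set_lessThan_add:
  fixes a a' b b' :: nat
  assumes "rel_set R1 {..<a} {..<a'}" "rel_set R2 {..<b} {..<b'}"
    and "\<And>p p'. p < a \<Longrightarrow> p' < a' \<Longrightarrow> R1 p p' \<Longrightarrow> R p p'"
    and "\<And>p p'. R2 p p' \<Longrightarrow> R (a + p) (a' + p')"
  shows "rel_set R {..<a + b} {..<a' + b'}"
proof (rule rel_setI)
  fix p assume "p \<in> {..<a + b}"
  then show "\<exists>p' \<in> {..<a' + b'}. R p p'"
    using assms rel_setD1[OF assms(1), of p] rel_setD1[OF assms(2), of "p - a"]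
    by (cases "p < a") (force, metis add_less_cancel_left le_add_diff_inverse lessThan_iff not_less)
next
  fix p' assume "p' \<in> {..<a' + b'}"
  then show "\<exists>p \<in> {..<a + b}. R p p'"
    using assms rel_setD2[OF assms(1), of p'] rel_setD2[OF assms(2), of "p' - a'"]
    by (cases "p' < a'") (force, metis add_less_cancel_left le_add_diff_inverse lessThan_iff not_less)
qed

lemma rel_set_lists_append:
  assumes "rel_set R1 {xs. length xs = a} {xs. length xs = a'}" "rel_set R2 {xs. length xs = b} {xs. length xs = b'}"
    and "\<And>xs xs' ys ys'. length xs = a \<Longrightarrow> length xs' = a' \<Longrightarrow> R1 xs xs' \<Longrightarrow> R2 ys ys' \<Longrightarrow>
      R (xs @ ys) (xs' @ ys')"
  shows "rel_set R {xs. length xs = a + b} {xs. length xs = a' + b'}"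
proof (rule rel_setI)
  fix xs :: "'a list" assume "xs \<in> {xs. length xs = a + b}"
  then have l: "length (take a xs) = a" "length (drop a xs) = b" by auto
  then obtain ys ys' where "length ys = a'" "R1 (take a xs) ys" "length ys' = b'" "R2 (drop a xs) ys'"
    using rel_setD1[OF assms(1)] rel_setD1[OF assms(2)] by blast
  with l have "R (take a xs @ drop a xs) (ys @ ys')" by (intro assms(3))
  then show "\<exists>zs \<in> {xs. length xs = a' + b'}. R xs zs" using \<open>length ys = a'\<close> \<open>length ys' = b'\<close> by (intro bexI[of _ "ys @ ys'"]) auto
next
  fix xs :: "'b list" assume "xs \<in> {xs. length xs = a' + b'}"
  then have l: "length (take a' xs) = a'" "length (drop a' xs) = b'" by auto
  then obtain ys ys' where "length ys = a" "R1 ys (take a' xs)" "length ys' = b" "R2 ys' (drop a' xs)"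
    using rel_setD2[OF assms(1)] rel_setD2[OF assms(2)] by blast
  with l have "R (ys @ ys') (take a' xs @ drop a' xs)" by (intro assms(3))
  then show "\<exists>zs \<in> {xs. length xs = a + b}. R zs xs" using \<open>length ys = a\<close> \<open>length ys' = b\<close> by (intro bexI[of _ "ys @ ys'"]) auto
qed

text \<open>A position of an annotated word: its letter, the names of the first-order variables
  denoting it, and the names of the set variables containing it.\<close>
type_synonym cell = "nat \<times> nat set \<times> nat set"

abbreviation fo_of :: "cell \<Rightarrow> nat set" where "fo_of c \<equiv> fst (snd c)"
abbreviation so_of :: "cell \<Rightarrow> nat set" where "so_of c \<equiv> snd (snd c)"

definition marked :: "cell list \<Rightarrow> cell list" where
  "marked m = filter (\<lambda>c. fo_of c \<noteq> {}) m"

definition mark_fo :: "nat \<Rightarrow> nat \<Rightarrow> cell list \<Rightarrow> cell list" where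
  "mark_fo i p m = m[p := (fst (m ! p), insert i (fo_of (m ! p)), so_of (m ! p))]"

definition mark_so :: "nat \<Rightarrow> bool list \<Rightarrow> cell list \<Rightarrow> cell list" where
  "mark_so X bs m = map2 (\<lambda>c b. (fst c, fo_of c, if b then insert X (so_of c) else so_of c)) m bs"

text \<open>One round of the game with first-order names below \<open>K1\<close> and set names below \<open>K2\<close>,
  of which those in \<open>U1\<close>, \<open>U2\<close> are in use: a fresh name is placed on a position, or on a set of
  positions, of one word and must be answered in the other.\<close>
definition ef_round ::
  "(nat set \<Rightarrow> nat set \<Rightarrow> cell list \<Rightarrow> cell list \<Rightarrow> bool) \<Rightarrow> nat \<Rightarrow> nat \<Rightarrow>
   nat set \<Rightarrow> nat set \<Rightarrow> cell list \<Rightarrow> cell list \<Rightarrow> bool" where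
  "ef_round E K1 K2 U1 U2 m m' \<longleftrightarrow> marked m = marked m' \<and>
    (\<forall>i \<in> {..<K1} - U1. rel_set (\<lambda>p p'. E (insert i U1) U2 (mark_fo i p m) (mark_fo i p' m'))
       {..<length m} {..<length m'}) \<and>
    (\<forall>X \<in> {..<K2} - U2. rel_set (\<lambda>bs bs'. E U1 (insert X U2) (mark_so X bs m) (mark_so X bs' m'))
       {bs. length bs = length m} {bs. length bs = length m'})"

primrec ef_equiv ::
  "nat \<Rightarrow> nat \<Rightarrow> nat \<Rightarrow> nat set \<Rightarrow> nat set \<Rightarrow> cell list \<Rightarrow> cell list \<Rightarrow> bool" where
  "ef_equiv K1 K2 0 U1 U2 m m' \<longleftrightarrow> marked m = marked m'"
| "ef_equiv K1 K2 (Suc q) U1 U2 m m' \<longleftrightarrow> ef_round (ef_equiv K1 K2 q) K1 K2 U1 U2 m m'"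

lemma length_mark_fo [simp]: "length (mark_fo i p m) = length m"
  by (simp add: mark_fo_def)

lemma length_mark_so [simp]: "length bs = length m \<Longrightarrow> length (mark_so X bs m) = length m"
  by (simp add: mark_so_def)

lemma ef_round_mono:
  assumes "ef_round E K1 K2 U1 U2 m m'" and "\<And>V1 V2 x y. E V1 V2 x y \<Longrightarrow> E' V1 V2 x y"
  shows "ef_round E' K1 K2 U1 U2 m m'"
  using assms(1) unfolding ef_round_def
  by (auto elim!: rel_set_mono_on intro: assms(2))

lemma ef_round_swap:
  "ef_round E K1 K2 U1 U2 m m' \<Longrightarrow> ef_round (\<lambda>V1 V2 x y. E V1 V2 y x) K1 K2 U1 U2 m' m"
  unfolding ef_round_def by (auto dest: rel_set_swap)

lemma ef_round_trans:
  assumes r1: "ef_round E K1 K2 U1 U2 m1 m2" and r2: "ef_round E K1 K2 U1 U2 m2 m3"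
    and trans: "\<And>V1 V2 x y z. E V1 V2 x y \<Longrightarrow> E V1 V2 y z \<Longrightarrow> E V1 V2 x z"
  shows "ef_round E K1 K2 U1 U2 m1 m3"
  unfolding ef_round_def
proof (intro conjI ballI)
  show "marked m1 = marked m3" using r1 r2 by (simp add: ef_round_def)
next
  fix i assume "i \<in> {..<K1} - U1"
  with r1 r2 have "rel_set ((\<lambda>p p'. E (insert i U1) U2 (mark_fo i p m1) (mark_fo i p' m2)) OO
      (\<lambda>p p'. E (insert i U1) U2 (mark_fo i p m2) (mark_fo i p' m3))) {..<length m1} {..<length m3}"
    unfolding ef_round_def by (blast intro: rel_set_OO_on)
  then show "rel_set (\<lambda>p p'. E (insert i U1) U2 (mark_fo i p m1) (mark_fo i p' m3)) {..<length m1} {..<length m3}"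
    by (rule rel_set_mono_on) (auto intro: trans)
next
  fix X assume "X \<in> {..<K2} - U2"
  with r1 r2 have "rel_set ((\<lambda>bs bs'. E U1 (insert X U2) (mark_so X bs m1) (mark_so X bs' m2)) OO
      (\<lambda>bs bs'. E U1 (insert X U2) (mark_so X bs m2) (mark_so X bs' m3)))
      {bs. length bs = length m1} {bs. length bs = length m3}"
    unfolding ef_round_def by (blast intro: rel_set_OO_on)
  then show "rel_set (\<lambda>bs bs'. E U1 (insert X U2) (mark_so X bs m1) (mark_so X bs' m3))
      {bs. length bs = length m1} {bs. length bs = length m3}"
    by (rule rel_set_mono_on) (auto intro: trans)
qed

lemma ef_round_used_mono:
  assumes r: "ef_round E K1 K2 U1 U2 m m'" and U: "U1 \<subseteq> V1" "U2 \<subseteq> V2"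
    and mono: "\<And>U1 U2 V1 V2 x y. E U1 U2 x y \<Longrightarrow> U1 \<subseteq> V1 \<Longrightarrow> U2 \<subseteq> V2 \<Longrightarrow> E V1 V2 x y"
  shows "ef_round E K1 K2 V1 V2 m m'"
  unfolding ef_round_def
proof (intro conjI ballI)
  show "marked m = marked m'" using r by (simp add: ef_round_def)
next
  fix i assume "i \<in> {..<K1} - V1"
  with r U have "rel_set (\<lambda>p p'. E (insert i U1) U2 (mark_fo i p m) (mark_fo i p' m')) {..<length m} {..<length m'}"
    unfolding ef_round_def by blast
  then show "rel_set (\<lambda>p p'. E (insert i V1) V2 (mark_fo i p m) (mark_fo i p' m')) {..<length m} {..<length m'}"
    by (rule rel_set_mono_on) (use U in \<open>auto elim: mono\<close>)
next
  fix X assume "X \<in> {..<K2} - V2"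
  with r U have "rel_set (\<lambda>bs bs'. E U1 (insert X U2) (mark_so X bs m) (mark_so X bs' m'))
      {bs. length bs = length m} {bs. length bs = length m'}"
    unfolding ef_round_def by blast
  then show "rel_set (\<lambda>bs bs'. E V1 (insert X V2) (mark_so X bs m) (mark_so X bs' m'))
      {bs. length bs = length m} {bs. length bs = length m'}"
    by (rule rel_set_mono_on) (use U in \<open>auto elim: mono\<close>)
qed

lemma ef_equiv_refl: "ef_equiv K1 K2 q U1 U2 m m"
  by (induction q arbitrary: U1 U2 m) (auto simp: ef_round_def rel_set_def)

lemma ef_equiv_sym: "ef_equiv K1 K2 q U1 U2 m m' \<Longrightarrow> ef_equiv K1 K2 q U1 U2 m' m"
  by (induction q arbitrary: U1 U2 m m') (auto elim: ef_round_mono[OF ef_round_swap])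

lemma ef_equiv_trans:
  "ef_equiv K1 K2 q U1 U2 m1 m2 \<Longrightarrow> ef_equiv K1 K2 q U1 U2 m2 m3 \<Longrightarrow> ef_equiv K1 K2 q U1 U2 m1 m3"
  by (induction q arbitrary: U1 U2 m1 m2 m3) (auto elim: ef_round_trans)

lemma ef_equiv_Suc_imp: "ef_equiv K1 K2 (Suc q) U1 U2 m m' \<Longrightarrow> ef_equiv K1 K2 q U1 U2 m m'"
proof (induction q arbitrary: U1 U2 m m')
  case 0 then show ?case by (simp add: ef_round_def)
qed (auto elim: ef_round_mono)

lemma ef_equiv_used_mono:
  "ef_equiv K1 K2 q U1 U2 m m' \<Longrightarrow> U1 \<subseteq> V1 \<Longrightarrow> U2 \<subseteq> V2 \<Longrightarrow> ef_equiv K1 K2 q V1 V2 m m'"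
  by (induction q arbitrary: U1 U2 V1 V2 m m') (auto elim: ef_round_used_mono)

lemma marked_append: "marked (m1 @ m2) = marked m1 @ marked m2"
  by (simp add: marked_def)

lemma mark_fo_append_left: "p < length m1 \<Longrightarrow> mark_fo i p (m1 @ m2) = mark_fo i p m1 @ m2"
  by (simp add: mark_fo_def nth_append list_update_append)

lemma mark_fo_append_right: "mark_fo i (length m1 + p) (m1 @ m2) = m1 @ mark_fo i p m2"
  by (simp add: mark_fo_def nth_append list_update_append)

lemma mark_so_append:
  "length bs1 = length m1 \<Longrightarrow> mark_so X (bs1 @ bs2) (m1 @ m2) = mark_so X bs1 m1 @ mark_so X bs2 m2"
  by (simp add: mark_so_def)

lemma ef_equiv_append:
  "ef_equiv K1 K2 q U1 U2 m1 m1' \<Longrightarrow> ef_equiv K1 K2 q U1 U2 m2 m2' \<Longrightarrow>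
   ef_equiv K1 K2 q U1 U2 (m1 @ m2) (m1' @ m2')"
proof (induction q arbitrary: U1 U2 m1 m1' m2 m2')
  case 0
  then show ?case by (simp add: marked_append)
next
  case (Suc q)
  have used: "ef_equiv K1 K2 q (insert i U1) U2 m m'" if "ef_equiv K1 K2 (Suc q) U1 U2 m m'" for i m m'
    using ef_equiv_used_mono[OF ef_equiv_Suc_imp[OF that]] by blast
  show ?case
    unfolding ef_equiv.simps ef_round_def
  proof (intro conjI ballI)
    show "marked (m1 @ m2) = marked (m1' @ m2')"
      using Suc.prems by (simp add: ef_round_def marked_append)
  next
    fix i assume "i \<in> {..<K1} - U1"
    then have "rel_set (\<lambda>p p'. ef_equiv K1 K2 q (insert i U1) U2 (mark_fo i p m1) (mark_fo i p' m1'))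
        {..<length m1} {..<length m1'}"
      "rel_set (\<lambda>p p'. ef_equiv K1 K2 q (insert i U1) U2 (mark_fo i p m2) (mark_fo i p' m2'))
        {..<length m2} {..<length m2'}"
      using Suc.prems by (simp_all add: ef_round_def)
    then show "rel_set (\<lambda>p p'. ef_equiv K1 K2 q (insert i U1) U2 (mark_fo i p (m1 @ m2)) (mark_fo i p' (m1' @ m2')))
        {..<length (m1 @ m2)} {..<length (m1' @ m2')}"
      unfolding length_append
    proof (rule rel_set_lessThan_add)
      fix p p' assume "p < length m1" "p' < length m1'"
        and "ef_equiv K1 K2 q (insert i U1) U2 (mark_fo i p m1) (mark_fo i p' m1')"
      then show "ef_equiv K1 K2 q (insert i U1) U2 (mark_fo i p (m1 @ m2)) (mark_fo i p' (m1' @ m2'))"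
        using Suc.IH used[OF Suc.prems(2)] by (simp add: mark_fo_append_left)
    next
      fix p p' assume "ef_equiv K1 K2 q (insert i U1) U2 (mark_fo i p m2) (mark_fo i p' m2')"
      then show "ef_equiv K1 K2 q (insert i U1) U2 (mark_fo i (length m1 + p) (m1 @ m2)) (mark_fo i (length m1' + p') (m1' @ m2'))"
        using Suc.IH used[OF Suc.prems(1)] by (simp add: mark_fo_append_right)
    qed
  next
    fix X assume "X \<in> {..<K2} - U2"
    then have "rel_set (\<lambda>bs bs'. ef_equiv K1 K2 q U1 (insert X U2) (mark_so X bs m1) (mark_so X bs' m1'))
        {bs. length bs = length m1} {bs. length bs = length m1'}"
      "rel_set (\<lambda>bs bs'. ef_equiv K1 K2 q U1 (insert X U2) (mark_so X bs m2) (mark_so X bs' m2'))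
        {bs. length bs = length m2} {bs. length bs = length m2'}"
      using Suc.prems by (simp_all add: ef_round_def)
    then show "rel_set (\<lambda>bs bs'. ef_equiv K1 K2 q U1 (insert X U2) (mark_so X bs (m1 @ m2)) (mark_so X bs' (m1' @ m2')))
        {bs. length bs = length (m1 @ m2)} {bs. length bs = length (m1' @ m2')}"
      unfolding length_append
      by (rule rel_set_lists_append) (simp add: Suc.IH mark_so_append)
  qed
qed

section \<open>Equivalent words satisfy the same formulas\<close>

definition marked_before :: "cell list \<Rightarrow> nat \<Rightarrow> nat" where
  "marked_before m p = length (marked (take p m))"

definition fo_vars :: "cell list \<Rightarrow> nat set" where
  "fo_vars m = (\<Union>c \<in> set m. fo_of c)"

definition so_vars :: "cell list \<Rightarrow> nat set" where
  "so_vars m = (\<Union>c \<in> set m. so_of c)"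

definition fo_functional :: "cell list \<Rightarrow> bool" where
  "fo_functional m \<longleftrightarrow> (\<forall>p < length m. \<forall>p' < length m. \<forall>i. i \<in> fo_of (m ! p) \<longrightarrow> i \<in> fo_of (m ! p') \<longrightarrow> p = p')"

definition well_marked :: "nat set \<Rightarrow> nat set \<Rightarrow> cell list \<Rightarrow> bool" where
  "well_marked U1 U2 m \<longleftrightarrow> fo_functional m \<and> fo_vars m \<subseteq> U1 \<and> so_vars m \<subseteq> U2"

lemma marked_Cons: "marked (c # m) = (if fo_of c \<noteq> {} then c # marked m else marked m)"
  by (simp add: marked_def)

lemma marked_before_0 [simp]: "marked_before m 0 = 0"
  by (simp add: marked_before_def marked_def)

lemma marked_before_Cons_Suc:
  "marked_before (c # m) (Suc p) = (if fo_of c \<noteq> {} then 1 else 0) + marked_before m p"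
  by (simp add: marked_before_def marked_Cons)

lemma nth_marked_marked_before:
  "p < length m \<Longrightarrow> fo_of (m ! p) \<noteq> {} \<Longrightarrow>
   marked_before m p < length (marked m) \<and> marked m ! marked_before m p = m ! p"
proof (induction m arbitrary: p)
  case (Cons c m)
  then show ?case
    by (cases p) (auto simp: marked_Cons marked_before_Cons_Suc)
qed simp

lemma marked_before_surj:
  "k < length (marked m) \<Longrightarrow> \<exists>p < length m. fo_of (m ! p) \<noteq> {} \<and> marked_before m p = k"
proof (induction m arbitrary: k)
  case Nil
  then show ?case by (simp add: marked_def)
next
  case (Cons c m)
  show ?case
  proof (cases "fo_of c \<noteq> {} \<and> k = 0")
    case True
    then show ?thesis by (intro exI[of _ 0]) simp
  next
    case False
    then have "k - (if fo_of c \<noteq> {} then 1 else 0) < length (marked m)"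
      using Cons.prems by (auto simp: marked_Cons split: if_splits)
    then obtain p where "p < length m" "fo_of (m ! p) \<noteq> {}"
      "marked_before m p = k - (if fo_of c \<noteq> {} then 1 else 0)"
      using Cons.IH by blast
    then show ?thesis
      using False by (intro exI[of _ "Suc p"]) (auto simp: marked_before_Cons_Suc)
  qed
qed

lemma marked_before_strict_mono:
  "p < q \<Longrightarrow> p < length m \<Longrightarrow> fo_of (m ! p) \<noteq> {} \<Longrightarrow> marked_before m p < marked_before m q"
proof (induction m arbitrary: p q)
  case (Cons c m)
  then obtain q0 where q: "q = Suc q0" by (cases q) auto
  show ?case
  proof (cases p)
    case (Suc p0)
    then have "marked_before m p0 < marked_before m q0" using Cons q by (intro Cons.IH) auto
    then show ?thesis using Suc q by (simp add: marked_before_Cons_Suc)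
  qed (use Cons.prems q in \<open>simp add: marked_before_Cons_Suc\<close>)
qed simp

lemma marked_before_less_iff:
  "p < length m \<Longrightarrow> q < length m \<Longrightarrow> fo_of (m ! p) \<noteq> {} \<Longrightarrow> fo_of (m ! q) \<noteq> {} \<Longrightarrow>
   marked_before m p < marked_before m q \<longleftrightarrow> p < q"
  by (metis marked_before_strict_mono linorder_neqE_nat not_less_iff_gr_or_eq)

lemma marked_before_eq_iff:
  "p < length m \<Longrightarrow> q < length m \<Longrightarrow> fo_of (m ! p) \<noteq> {} \<Longrightarrow> fo_of (m ! q) \<noteq> {} \<Longrightarrow>
   marked_before m p = marked_before m q \<longleftrightarrow> p = q"
  by (metis marked_before_strict_mono linorder_neqE_nat less_irrefl)

lemma fo_functionalD:
  "fo_functional m \<Longrightarrow> p < length m \<Longrightarrow> p' < length m \<Longrightarrow> i \<in> fo_of (m ! p) \<Longrightarrow> i \<in> fo_of (m ! p') \<Longrightarrow> p = p'"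
  unfolding fo_functional_def by blast

text \<open>Equal marked subsequences put each first-order name at the same rank among the marked
  cells, which transfers order and equality between the named positions.\<close>
lemma same_marked_rank:
  assumes "marked m = marked m'" "fo_functional m" "p < length m" "p' < length m'"
    and "i \<in> fo_of (m ! p)" "i \<in> fo_of (m' ! p')"
  shows "marked_before m p = marked_before m' p' \<and> m ! p = m' ! p'"
proof -
  have k': "marked_before m' p' < length (marked m')" "marked m' ! marked_before m' p' = m' ! p'"
    using nth_marked_marked_before[OF assms(4)] assms(6) by auto
  obtain p2 where p2: "p2 < length m" "fo_of (m ! p2) \<noteq> {}" "marked_before m p2 = marked_before m' p'"
    using marked_before_surj[of "marked_before m' p'" m] k'(1) assms(1) by auto
  have "m ! p2 = m' ! p'"
    using nth_marked_marked_before[OF p2(1,2)] assms(1) k'(2) p2(3) by simp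
  then have "i \<in> fo_of (m ! p2)" using assms(6) by simp
  then have "p2 = p" using fo_functionalD[OF assms(2) p2(1) assms(3)] assms(5) by blast
  then show ?thesis using p2 \<open>m ! p2 = m' ! p'\<close> by simp
qed

lemma ef_equiv_marked: "ef_equiv K1 K2 q U1 U2 m m' \<Longrightarrow> marked m = marked m'"
  by (cases q) (auto simp: ef_round_def)

text \<open>The game uses fresh names rather than the variables of the formula: in the cells, the
  first-order variable \<open>x\<close> is recorded under the name \<open>\<sigma> x\<close> and the set variable \<open>X\<close> under \<open>\<tau> X\<close>.\<close>
definition encodes :: "cell list \<Rightarrow> nat list \<Rightarrow> (nat \<Rightarrow> nat) \<Rightarrow> (nat \<Rightarrow> nat set) \<Rightarrow>
    (nat \<Rightarrow> nat) \<Rightarrow> (nat \<Rightarrow> nat) \<Rightarrow> nat set \<Rightarrow> nat set \<Rightarrow> bool" where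
  "encodes m w I J \<sigma> \<tau> F1 F2 \<longleftrightarrow> map fst m = w \<and>
     (\<forall>x \<in> F1. I x \<in> univ w \<and> \<sigma> x \<in> fo_of (m ! (I x - 1))) \<and>
     (\<forall>X \<in> F2. \<forall>p \<in> univ w. p \<in> J X \<longleftrightarrow> \<tau> X \<in> so_of (m ! (p - 1)))"

lemma encodes_pos:
  assumes "encodes m w I J \<sigma> \<tau> F1 F2" "x \<in> F1"
  shows "I x - 1 < length m" "I x = Suc (I x - 1)" "\<sigma> x \<in> fo_of (m ! (I x - 1))" "length m = length w"
proof -
  have "length m = length w" using assms(1) unfolding encodes_def by (metis length_map)
  moreover have "I x \<in> univ w" "\<sigma> x \<in> fo_of (m ! (I x - 1))"
    using assms unfolding encodes_def by auto
  ultimately show "I x - 1 < length m" "I x = Suc (I x - 1)" "\<sigma> x \<in> fo_of (m ! (I x - 1))" "length m = length w"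
    by (auto simp: univ_def)
qed

lemma ef_equiv_encodes_agree:
  assumes "ef_equiv K1 K2 q U1 U2 m m'" "well_marked U1 U2 m" "well_marked U1 U2 m'"
    and "encodes m w I J \<sigma> \<tau> F1 F2" "encodes m' w' I' J' \<sigma> \<tau> F1 F2" "x \<in> F1" "y \<in> F1"
  shows "I x < I y \<longleftrightarrow> I' x < I' y" "I x = I y \<longleftrightarrow> I' x = I' y" "m ! (I x - 1) = m' ! (I' x - 1)"
proof -
  have mm: "marked m = marked m'" "fo_functional m"
    using ef_equiv_marked[OF assms(1)] assms(2) by (simp_all add: well_marked_def)
  note x = encodes_pos[OF assms(4,6)] encodes_pos[OF assms(5,6)]
  note y = encodes_pos[OF assms(4,7)] encodes_pos[OF assms(5,7)]
  have rx: "marked_before m (I x - 1) = marked_before m' (I' x - 1)" "m ! (I x - 1) = m' ! (I' x - 1)"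
    using same_marked_rank[OF mm] x by blast+
  have ry: "marked_before m (I y - 1) = marked_before m' (I' y - 1)"
    using same_marked_rank[OF mm] y by blast
  have ne: "fo_of (m ! (I x - 1)) \<noteq> {}" "fo_of (m ! (I y - 1)) \<noteq> {}"
    "fo_of (m' ! (I' x - 1)) \<noteq> {}" "fo_of (m' ! (I' y - 1)) \<noteq> {}"
    using x y by auto
  have "I x - 1 < I y - 1 \<longleftrightarrow> I' x - 1 < I' y - 1"
    using marked_before_less_iff[of "I x - 1" m "I y - 1"] marked_before_less_iff[of "I' x - 1" m' "I' y - 1"]
      x y ne rx ry by simp
  then show "I x < I y \<longleftrightarrow> I' x < I' y" using x y by linarith
  have "I x - 1 = I y - 1 \<longleftrightarrow> I' x - 1 = I' y - 1"
    using marked_before_eq_iff[of "I x - 1" m "I y - 1"] marked_before_eq_iff[of "I' x - 1" m' "I' y - 1"]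
      x y ne rx ry by simp
  then show "I x = I y \<longleftrightarrow> I' x = I' y" using x y by linarith
  show "m ! (I x - 1) = m' ! (I' x - 1)" by (fact rx(2))
qed

lemma nth_mark_fo:
  "p < length m \<Longrightarrow> k < length m \<Longrightarrow>
   mark_fo i p m ! k = (if k = p then (fst (m ! p), insert i (fo_of (m ! p)), so_of (m ! p)) else m ! k)"
  by (simp add: mark_fo_def)

lemma map_fst_mark_fo [simp]: "map fst (mark_fo i p m) = map fst m"
proof (rule nth_equalityI)
  fix k assume "k < length (map fst (mark_fo i p m))"
  then show "map fst (mark_fo i p m) ! k = map fst m ! k"
    by (cases "k = p") (auto simp: mark_fo_def)
qed simp

lemma nth_mark_so:
  "length bs = length m \<Longrightarrow> k < length m \<Longrightarrow>
   mark_so X bs m ! k = (fst (m ! k), fo_of (m ! k), if bs ! k then insert X (so_of (m ! k)) else so_of (m ! k))"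
  by (simp add: mark_so_def)

lemma map_fst_mark_so [simp]: "length bs = length m \<Longrightarrow> map fst (mark_so X bs m) = map fst m"
  by (rule nth_equalityI) (auto simp: nth_mark_so)

lemma fo_functional_mark_fo: "fo_functional m \<Longrightarrow> i \<notin> fo_vars m \<Longrightarrow> p < length m \<Longrightarrow> fo_functional (mark_fo i p m)"
  unfolding fo_functional_def fo_vars_def by (simp add: nth_mark_fo) (metis nth_mem)

lemma fo_functional_mark_so: "fo_functional m \<Longrightarrow> length bs = length m \<Longrightarrow> fo_functional (mark_so X bs m)"
  unfolding fo_functional_def by (simp add: nth_mark_so)

lemma fo_vars_mark_fo: "p < length m \<Longrightarrow> fo_vars (mark_fo i p m) \<subseteq> insert i (fo_vars m)"
  unfolding fo_vars_def by (force simp: in_set_conv_nth nth_mark_fo split: if_splits)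

lemma so_vars_mark_fo: "p < length m \<Longrightarrow> so_vars (mark_fo i p m) \<subseteq> so_vars m"
  unfolding so_vars_def by (force simp: in_set_conv_nth nth_mark_fo split: if_splits)

lemma fo_vars_mark_so: "length bs = length m \<Longrightarrow> fo_vars (mark_so X bs m) \<subseteq> fo_vars m"
  unfolding fo_vars_def by (force simp: in_set_conv_nth nth_mark_so)

lemma so_vars_mark_so: "length bs = length m \<Longrightarrow> so_vars (mark_so X bs m) \<subseteq> insert X (so_vars m)"
  unfolding so_vars_def by (force simp: in_set_conv_nth nth_mark_so split: if_splits)

lemma well_marked_mark_fo:
  "well_marked U1 U2 m \<Longrightarrow> i \<notin> U1 \<Longrightarrow> p < length m \<Longrightarrow> well_marked (insert i U1) U2 (mark_fo i p m)"
  unfolding well_marked_def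
  using fo_functional_mark_fo fo_vars_mark_fo so_vars_mark_fo by (metis insert_mono order_trans subsetD)

lemma well_marked_mark_so:
  "well_marked U1 U2 m \<Longrightarrow> length bs = length m \<Longrightarrow> well_marked U1 (insert X U2) (mark_so X bs m)"
  unfolding well_marked_def
  using fo_functional_mark_so fo_vars_mark_so so_vars_mark_so by (metis insert_mono order_trans)

lemma encodes_mono: "encodes m w I J \<sigma> \<tau> F1 F2 \<Longrightarrow> G1 \<subseteq> F1 \<Longrightarrow> G2 \<subseteq> F2 \<Longrightarrow> encodes m w I J \<sigma> \<tau> G1 G2"
  unfolding encodes_def by blast

lemma encodes_mark_fo:
  assumes enc: "encodes m w I J \<sigma> \<tau> (F1 - {x}) F2" and p: "p < length m"
  shows "encodes (mark_fo i p m) w (I(x := Suc p)) J (\<sigma>(x := i)) \<tau> F1 F2"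
proof -
  have l: "length m = length w" using enc unfolding encodes_def by (metis length_map)
  have "(I(x := Suc p)) y \<in> univ w \<and> (\<sigma>(x := i)) y \<in> fo_of (mark_fo i p m ! ((I(x := Suc p)) y - 1))"
    if y: "y \<in> F1" for y
  proof (cases "y = x")
    case True
    then show ?thesis using p l by (simp add: univ_def nth_mark_fo)
  next
    case False
    then have "I y \<in> univ w" "\<sigma> y \<in> fo_of (m ! (I y - 1))" using enc y unfolding encodes_def by auto
    moreover from this have "I y - 1 < length m" using l by (auto simp: univ_def)
    ultimately show ?thesis using False p by (cases "I y - 1 = p") (auto simp: nth_mark_fo)
  qed
  moreover have "so_of (mark_fo i p m ! (q - 1)) = so_of (m ! (q - 1))" if "q \<in> univ w" for q
  proof -
    have "q - 1 < length m" using that l by (auto simp: univ_def)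
    then show ?thesis using p by (simp add: nth_mark_fo)
  qed
  ultimately show ?thesis using enc unfolding encodes_def by simp
qed

lemma encodes_mark_so:
  assumes enc: "encodes m w I J \<sigma> \<tau> F1 (F2 - {X})" and bs: "length bs = length m"
    and Y: "Y \<notin> \<tau> ` (F2 - {X})" "Y \<notin> so_vars m" and S: "\<forall>p \<in> univ w. p \<in> S \<longleftrightarrow> bs ! (p - 1)"
  shows "encodes (mark_so Y bs m) w I (J(X := S)) \<sigma> (\<tau>(X := Y)) F1 F2"
proof -
  have l: "length m = length w" using enc unfolding encodes_def by (metis length_map)
  have "I y \<in> univ w \<and> \<sigma> y \<in> fo_of (mark_so Y bs m ! (I y - 1))" if "y \<in> F1" for y
  proof -
    have "I y \<in> univ w" "\<sigma> y \<in> fo_of (m ! (I y - 1))" using enc that unfolding encodes_def by auto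
    moreover from this have "I y - 1 < length m" using l by (auto simp: univ_def)
    ultimately show ?thesis using bs by (simp add: nth_mark_so)
  qed
  moreover have "q \<in> (J(X := S)) Z \<longleftrightarrow> (\<tau>(X := Y)) Z \<in> so_of (mark_so Y bs m ! (q - 1))"
    if Z: "Z \<in> F2" and q: "q \<in> univ w" for Z q
  proof -
    have ql: "q - 1 < length m" using q l by (auto simp: univ_def)
    then have "Y \<notin> so_of (m ! (q - 1))" using Y(2) unfolding so_vars_def by (meson UN_I nth_mem)
    moreover have "\<tau> Z \<noteq> Y" if "Z \<noteq> X" using Y(1) Z that by auto
    ultimately show ?thesis
      using enc Z q ql bs S unfolding encodes_def by (cases "Z = X") (auto simp: nth_mark_so)
  qed
  ultimately show ?thesis using enc bs unfolding encodes_def by simp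
qed

lemma card_Diff_insert_fresh: "i \<in> A - U \<Longrightarrow> finite A \<Longrightarrow> card (A - insert i U) = card (A - U) - 1"
  by (metis Diff_insert card_Diff_singleton_if)

lemma rel_set_bex_iff:
  "rel_set R A B \<Longrightarrow> (\<And>a b. a \<in> A \<Longrightarrow> b \<in> B \<Longrightarrow> R a b \<Longrightarrow> P a \<longleftrightarrow> Q b) \<Longrightarrow>
   (\<exists>a \<in> A. P a) \<longleftrightarrow> (\<exists>b \<in> B. Q b)"
  unfolding rel_set_def by blast

lemma sat_Ex1_iff: "sat w I J (Ex1 x g) \<longleftrightarrow> (\<exists>p \<in> {..<length w}. sat w (I(x := Suc p)) J g)"
  unfolding sat.simps univ_def image_Suc_lessThan[symmetric] by blast

lemma sat_Ex2_iff:
  "sat w I J (Ex2 X g) \<longleftrightarrow> (\<exists>bs \<in> {bs. length bs = length w}. sat w I (J(X := {p \<in> univ w. bs ! (p - 1)})) g)"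
proof
  assume "sat w I J (Ex2 X g)"
  then obtain S where S: "S \<subseteq> univ w" "sat w I (J(X := S)) g" by auto
  define bs where "bs = map (\<lambda>k. Suc k \<in> S) [0..<length w]"
  have "bs ! (p - 1) \<longleftrightarrow> p \<in> S" if "p \<in> univ w" for p
    using that by (auto simp: bs_def univ_def)
  then have "{p \<in> univ w. bs ! (p - 1)} = S" using S(1) by auto
  then show "\<exists>bs \<in> {bs. length bs = length w}. sat w I (J(X := {p \<in> univ w. bs ! (p - 1)})) g"
    using S(2) by (intro bexI[of _ bs]) (auto simp: bs_def)
next
  assume "\<exists>bs \<in> {bs. length bs = length w}. sat w I (J(X := {p \<in> univ w. bs ! (p - 1)})) g"
  then obtain bs where "sat w I (J(X := {p \<in> univ w. bs ! (p - 1)})) g" by blast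
  then show "sat w I J (Ex2 X g)" by (auto intro!: exI[of _ "{p \<in> univ w. bs ! (p - 1)}"])
qed

lemma ef_equiv_sat:
  assumes "ef_equiv K1 K2 q U1 U2 m m'" "qrank f \<le> q" "well_marked U1 U2 m" "well_marked U1 U2 m'"
    "q \<le> card ({..<K1} - U1)" "q \<le> card ({..<K2} - U2)" "\<tau> ` fv2 f \<subseteq> U2"
    "encodes m w I J \<sigma> \<tau> (fv1 f) (fv2 f)" "encodes m' w' I' J' \<sigma> \<tau> (fv1 f) (fv2 f)"
  shows "sat w I J f \<longleftrightarrow> sat w' I' J' f"
  using assms
proof (induction f arbitrary: q U1 U2 m m' w w' I I' J J' \<sigma> \<tau>)
  case (Less x y)
  show ?case using ef_equiv_encodes_agree(1)[OF Less.prems(1,3,4,8,9), of x y] by simp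
next
  case (Eq x y)
  show ?case using ef_equiv_encodes_agree(2)[OF Eq.prems(1,3,4,8,9), of x y] by simp
next
  case (Lab a x)
  have "m ! (I x - 1) = m' ! (I' x - 1)" using ef_equiv_encodes_agree(3)[OF Lab.prems(1,3,4,8,9), of x x] by simp
  moreover have "w = map fst m" "w' = map fst m'" using Lab.prems(8,9) by (simp_all add: encodes_def)
  moreover have "x \<in> fv1 (Lab a x)" by simp
  from encodes_pos[OF Lab.prems(8) this] encodes_pos[OF Lab.prems(9) this]
  have "I x \<in> univ w" "I' x \<in> univ w'" "I x - 1 < length m" "I' x - 1 < length m'"
    by (auto simp: univ_def)
  ultimately show ?case by simp
next
  case (Mem x X)
  have "m ! (I x - 1) = m' ! (I' x - 1)" using ef_equiv_encodes_agree(3)[OF Mem.prems(1,3,4,8,9), of x x] by simp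
  moreover have "x \<in> fv1 (Mem x X)" by simp
  from encodes_pos[OF Mem.prems(8) this] encodes_pos[OF Mem.prems(9) this]
  have "I x \<in> univ w" "I' x \<in> univ w'" by (auto simp: univ_def)
  moreover have "\<forall>p \<in> univ w. p \<in> J X \<longleftrightarrow> \<tau> X \<in> so_of (m ! (p - 1))"
    "\<forall>p \<in> univ w'. p \<in> J' X \<longleftrightarrow> \<tau> X \<in> so_of (m' ! (p - 1))"
    using Mem.prems(8,9) by (simp_all add: encodes_def)
  ultimately show ?case by simp
next
  case (Neg f)
  then show ?case by simp
next
  case (Conj f g)
  have "sat w I J f \<longleftrightarrow> sat w' I' J' f"
    using Conj.prems by (intro Conj.IH(1)[OF Conj.prems(1)]) (auto elim: encodes_mono)
  moreover have "sat w I J g \<longleftrightarrow> sat w' I' J' g"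
    using Conj.prems by (intro Conj.IH(2)[OF Conj.prems(1)]) (auto elim: encodes_mono)
  ultimately show ?case by simp
next
  case (Ex1 x g)
  obtain q0 where q: "q = Suc q0" and qg: "qrank g \<le> q0" using Ex1.prems(2) by (cases q) auto
  have "{..<K1} - U1 \<noteq> {}" using Ex1.prems(5) q by (metis card.empty not_less_eq_eq zero_le)
  then obtain i where i: "i \<in> {..<K1} - U1" by blast
  have c1: "q0 \<le> card ({..<K1} - insert i U1)" using card_Diff_insert_fresh[OF i] Ex1.prems(5) q by simp
  have l: "length m = length w" "length m' = length w'"
    using Ex1.prems(8,9) unfolding encodes_def by (metis length_map)+
  have enc: "encodes m w I J \<sigma> \<tau> (fv1 g - {x}) (fv2 g)" "encodes m' w' I' J' \<sigma> \<tau> (fv1 g - {x}) (fv2 g)"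
    using Ex1.prems(8,9) by simp_all
  have "rel_set (\<lambda>p p'. ef_equiv K1 K2 q0 (insert i U1) U2 (mark_fo i p m) (mark_fo i p' m'))
      {..<length m} {..<length m'}"
    using Ex1.prems(1) q i by (simp add: ef_round_def)
  then show ?case unfolding sat_Ex1_iff l[symmetric]
  proof (rule rel_set_bex_iff)
    fix p p' assume p: "p \<in> {..<length m}" "p' \<in> {..<length m'}"
      and e: "ef_equiv K1 K2 q0 (insert i U1) U2 (mark_fo i p m) (mark_fo i p' m')"
    show "sat w (I(x := Suc p)) J g \<longleftrightarrow> sat w' (I'(x := Suc p')) J' g"
    proof (rule Ex1.IH[OF e qg])
      show "well_marked (insert i U1) U2 (mark_fo i p m)" "well_marked (insert i U1) U2 (mark_fo i p' m')"
        using well_marked_mark_fo Ex1.prems(3,4) i p by auto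
      show "q0 \<le> card ({..<K2} - U2)" using Ex1.prems(6) q by simp
      show "\<tau> ` fv2 g \<subseteq> U2" using Ex1.prems(7) by simp
      show "encodes (mark_fo i p m) w (I(x := Suc p)) J (\<sigma>(x := i)) \<tau> (fv1 g) (fv2 g)"
        "encodes (mark_fo i p' m') w' (I'(x := Suc p')) J' (\<sigma>(x := i)) \<tau> (fv1 g) (fv2 g)"
        using encodes_mark_fo[OF enc(1)] encodes_mark_fo[OF enc(2)] p by auto
    qed (fact c1)
  qed
next
  case (Ex2 X g)
  obtain q0 where q: "q = Suc q0" and qg: "qrank g \<le> q0" using Ex2.prems(2) by (cases q) auto
  have "{..<K2} - U2 \<noteq> {}" using Ex2.prems(6) q by (metis card.empty not_less_eq_eq zero_le)
  then obtain Y where Y: "Y \<in> {..<K2} - U2" by blast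
  have c2: "q0 \<le> card ({..<K2} - insert Y U2)" using card_Diff_insert_fresh[OF Y] Ex2.prems(6) q by simp
  have l: "length m = length w" "length m' = length w'"
    using Ex2.prems(8,9) unfolding encodes_def by (metis length_map)+
  have enc: "encodes m w I J \<sigma> \<tau> (fv1 g) (fv2 g - {X})" "encodes m' w' I' J' \<sigma> \<tau> (fv1 g) (fv2 g - {X})"
    using Ex2.prems(8,9) by simp_all
  have Ym: "Y \<notin> so_vars m" "Y \<notin> so_vars m'" "Y \<notin> \<tau> ` (fv2 g - {X})"
    using Y Ex2.prems(3,4,7) unfolding well_marked_def by auto
  have "rel_set (\<lambda>bs bs'. ef_equiv K1 K2 q0 U1 (insert Y U2) (mark_so Y bs m) (mark_so Y bs' m'))
      {bs. length bs = length m} {bs. length bs = length m'}"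
    using Ex2.prems(1) q Y by (simp add: ef_round_def)
  then show ?case unfolding sat_Ex2_iff l[symmetric]
  proof (rule rel_set_bex_iff)
    fix bs bs' assume bs: "bs \<in> {bs. length bs = length m}" "bs' \<in> {bs. length bs = length m'}"
      and e: "ef_equiv K1 K2 q0 U1 (insert Y U2) (mark_so Y bs m) (mark_so Y bs' m')"
    show "sat w I (J(X := {p \<in> univ w. bs ! (p - 1)})) g \<longleftrightarrow> sat w' I' (J'(X := {p \<in> univ w'. bs' ! (p - 1)})) g"
    proof (rule Ex2.IH[OF e qg])
      show "well_marked U1 (insert Y U2) (mark_so Y bs m)" "well_marked U1 (insert Y U2) (mark_so Y bs' m')"
        using well_marked_mark_so Ex2.prems(3,4) bs by auto
      show "q0 \<le> card ({..<K1} - U1)" using Ex2.prems(5) q by simp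
      show "(\<tau>(X := Y)) ` fv2 g \<subseteq> insert Y U2" using Ex2.prems(7) by auto
      show "encodes (mark_so Y bs m) w I (J(X := {p \<in> univ w. bs ! (p - 1)})) \<sigma> (\<tau>(X := Y)) (fv1 g) (fv2 g)"
        "encodes (mark_so Y bs' m') w' I' (J'(X := {p \<in> univ w'. bs' ! (p - 1)})) \<sigma> (\<tau>(X := Y)) (fv1 g) (fv2 g)"
        using encodes_mark_so[OF enc(1) _ Ym(3,1)] encodes_mark_so[OF enc(2) _ Ym(3,2)] bs by auto
    qed (fact c2)
  qed
qed

section \<open>Finite index and pumping\<close>

definition admissible :: "nat set \<Rightarrow> nat set \<Rightarrow> nat set \<Rightarrow> cell list \<Rightarrow> bool" where
  "admissible \<Sigma> U1 U2 m \<longleftrightarrow> well_marked U1 U2 m \<and> set (map fst m) \<subseteq> \<Sigma>"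

definition ef_class :: "nat \<Rightarrow> nat \<Rightarrow> nat set \<Rightarrow> nat \<Rightarrow> nat set \<Rightarrow> nat set \<Rightarrow> cell list \<Rightarrow> cell list set" where
  "ef_class K1 K2 \<Sigma> q U1 U2 m = {m'. admissible \<Sigma> U1 U2 m' \<and> ef_equiv K1 K2 q U1 U2 m m'}"

lemma ef_class_eq_iff:
  "admissible \<Sigma> U1 U2 m \<Longrightarrow> admissible \<Sigma> U1 U2 m' \<Longrightarrow>
   ef_class K1 K2 \<Sigma> q U1 U2 m = ef_class K1 K2 \<Sigma> q U1 U2 m' \<longleftrightarrow> ef_equiv K1 K2 q U1 U2 m m'"
proof
  assume "admissible \<Sigma> U1 U2 m'" "ef_class K1 K2 \<Sigma> q U1 U2 m = ef_class K1 K2 \<Sigma> q U1 U2 m'"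
  then show "ef_equiv K1 K2 q U1 U2 m m'" unfolding ef_class_def using ef_equiv_refl by blast
next
  assume "ef_equiv K1 K2 q U1 U2 m m'"
  then show "ef_class K1 K2 \<Sigma> q U1 U2 m = ef_class K1 K2 \<Sigma> q U1 U2 m'"
    unfolding ef_class_def by (blast intro: ef_equiv_sym ef_equiv_trans)
qed

lemma admissible_mark_fo:
  "admissible \<Sigma> U1 U2 m \<Longrightarrow> i \<notin> U1 \<Longrightarrow> p < length m \<Longrightarrow> admissible \<Sigma> (insert i U1) U2 (mark_fo i p m)"
  unfolding admissible_def by (simp add: well_marked_mark_fo)

lemma admissible_mark_so:
  "admissible \<Sigma> U1 U2 m \<Longrightarrow> length bs = length m \<Longrightarrow> admissible \<Sigma> U1 (insert X U2) (mark_so X bs m)"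
  unfolding admissible_def by (simp add: well_marked_mark_so)

lemma finite_image_factor:
  assumes "\<And>x y. x \<in> S \<Longrightarrow> y \<in> S \<Longrightarrow> g x = g y \<Longrightarrow> f x = f y" "finite (g ` S)"
  shows "finite (f ` S)"
proof -
  define F where "F v = f (SOME x. x \<in> S \<and> g x = v)" for v
  have "F (g x) = f x" if "x \<in> S" for x
    unfolding F_def using assms(1) that by (metis (mono_tags, lifting) someI_ex)
  then have "f ` S \<subseteq> F ` g ` S" by force
  then show ?thesis using assms(2) finite_surj by blast
qed

lemma length_marked_le:
  assumes "fo_functional m" "fo_vars m \<subseteq> U" "finite U"
  shows "length (marked m) \<le> card U"
proof -
  define pick where "pick k = (SOME i. i \<in> fo_of (marked m ! k))" for k
  have pick: "pick k \<in> fo_of (marked m ! k) \<and> (\<exists>p<length m. marked_before m p = k \<and> marked m ! k = m ! p)"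
    if k: "k < length (marked m)" for k
  proof -
    obtain p where p: "p < length m" "fo_of (m ! p) \<noteq> {}" "marked_before m p = k"
      using marked_before_surj k by blast
    have "marked m ! k = m ! p" using nth_marked_marked_before p by blast
    moreover have "fo_of (marked m ! k) \<noteq> {}" using p calculation by simp
    ultimately show ?thesis unfolding pick_def using p by (metis (mono_tags) ex_in_conv someI_ex)
  qed
  have "inj_on pick {..<length (marked m)}"
  proof (rule inj_onI)
    fix k k' assume k: "k \<in> {..<length (marked m)}" and k': "k' \<in> {..<length (marked m)}"
      and eq: "pick k = pick k'"
    obtain p where p: "p < length m" "marked_before m p = k" "marked m ! k = m ! p"
      using pick k by auto
    obtain p' where p': "p' < length m" "marked_before m p' = k'" "marked m ! k' = m ! p'"
      using pick k' by auto
    have "pick k \<in> fo_of (m ! p)" "pick k' \<in> fo_of (m ! p')"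
      using pick[of k] pick[of k'] k k' p(3) p'(3) by simp_all
    then have "p = p'" using fo_functionalD[OF assms(1) p(1) p'(1)] eq by simp
    then show "k = k'" using p(2) p'(2) by simp
  qed
  moreover have "pick ` {..<length (marked m)} \<subseteq> U"
  proof
    fix i assume "i \<in> pick ` {..<length (marked m)}"
    then obtain k where k: "k < length (marked m)" "i = pick k" by auto
    then obtain p where p: "p < length m" "marked m ! k = m ! p" using pick by blast
    have "i \<in> fo_of (m ! p)" using pick[OF k(1)] k(2) p(2) by simp
    then show "i \<in> U" using assms(2) p(1) unfolding fo_vars_def by (meson UN_I nth_mem subsetD)
  qed
  ultimately show ?thesis using card_inj_on_le[OF _ _ assms(3)] by fastforce
qed

lemma finite_marked_images:
  assumes "finite \<Sigma>" "finite U1" "finite U2"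
  shows "finite (marked ` {m. admissible \<Sigma> U1 U2 m})"
proof (rule finite_subset)
  show "marked ` {m. admissible \<Sigma> U1 U2 m} \<subseteq> {l. set l \<subseteq> \<Sigma> \<times> Pow U1 \<times> Pow U2 \<and> length l \<le> card U1}"
  proof
    fix l assume "l \<in> marked ` {m. admissible \<Sigma> U1 U2 m}"
    then obtain m where m: "admissible \<Sigma> U1 U2 m" "l = marked m" by auto
    have "length l \<le> card U1"
      using length_marked_le m assms(2) unfolding admissible_def well_marked_def by blast
    moreover have "c \<in> \<Sigma> \<times> Pow U1 \<times> Pow U2" if "c \<in> set l" for c
    proof -
      have "c \<in> set m" using that m by (auto simp: marked_def)
      then have "fst c \<in> \<Sigma>" "fo_of c \<subseteq> U1" "so_of c \<subseteq> U2"
        using m unfolding admissible_def well_marked_def fo_vars_def so_vars_def by auto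
      then show ?thesis by (simp add: mem_Times_iff)
    qed
    ultimately show "l \<in> {l. set l \<subseteq> \<Sigma> \<times> Pow U1 \<times> Pow U2 \<and> length l \<le> card U1}" by blast
  qed
  show "finite {l. set l \<subseteq> \<Sigma> \<times> Pow U1 \<times> Pow U2 \<and> length l \<le> card U1}"
    using assms by (intro finite_lists_length_le) auto
qed

lemma rel_set_of_class_pairs:
  assumes "{(i, f i a) | i a. i \<in> I \<and> a \<in> A} = {(i, g i b) | i b. i \<in> I \<and> b \<in> B}" "i \<in> I"
    and "\<And>a b. a \<in> A \<Longrightarrow> b \<in> B \<Longrightarrow> f i a = g i b \<Longrightarrow> R a b"
  shows "rel_set R A B"
proof (rule rel_setI)
  fix a assume "a \<in> A"
  then have "(i, f i a) \<in> {(i, g i b) | i b. i \<in> I \<and> b \<in> B}" using assms(1,2) by blast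
  then show "\<exists>b \<in> B. R a b" using assms(3) \<open>a \<in> A\<close> by blast
next
  fix b assume "b \<in> B"
  then have "(i, g i b) \<in> {(i, f i a) | i a. i \<in> I \<and> a \<in> A}" using assms(1,2) by blast
  then show "\<exists>a \<in> A. R a b" using assms(3) \<open>b \<in> B\<close> by fastforce
qed

text \<open>After one more round, a class is determined by the marked subsequence together with the
  classes reachable by a single move.\<close>
lemma finite_ef_classes:
  "finite \<Sigma> \<Longrightarrow> finite U1 \<Longrightarrow> finite U2 \<Longrightarrow>
   finite (ef_class K1 K2 \<Sigma> q U1 U2 ` {m. admissible \<Sigma> U1 U2 m})"
proof (induction q arbitrary: U1 U2)
  case 0
  show ?case
  proof (rule finite_image_factor[where g = marked])
    show "finite (marked ` {m. admissible \<Sigma> U1 U2 m})" using finite_marked_images 0 by blast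
  qed (simp add: ef_class_eq_iff)
next
  case (Suc q)
  define cls where "cls = ef_class K1 K2 \<Sigma> q"
  define FO where "FO m = {(i, cls (insert i U1) U2 (mark_fo i p m)) | i p. i \<in> {..<K1} - U1 \<and> p \<in> {..<length m}}" for m
  define SO where "SO m = {(X, cls U1 (insert X U2) (mark_so X bs m)) | X bs. X \<in> {..<K2} - U2 \<and> bs \<in> {bs. length bs = length m}}" for m
  define FOS where "FOS = (\<Union>i \<in> {..<K1}. {i} \<times> (cls (insert i U1) U2 ` {m. admissible \<Sigma> (insert i U1) U2 m}))"
  define SOS where "SOS = (\<Union>X \<in> {..<K2}. {X} \<times> (cls U1 (insert X U2) ` {m. admissible \<Sigma> U1 (insert X U2) m}))"
  show ?case
  proof (rule finite_image_factor[where g = "\<lambda>m. (marked m, FO m, SO m)"])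
    fix x y assume "x \<in> {m. admissible \<Sigma> U1 U2 m}" "y \<in> {m. admissible \<Sigma> U1 U2 m}"
      and e: "(marked x, FO x, SO x) = (marked y, FO y, SO y)"
    then have ax: "admissible \<Sigma> U1 U2 x" and ay: "admissible \<Sigma> U1 U2 y" by auto
    have "rel_set (\<lambda>p p'. ef_equiv K1 K2 q (insert i U1) U2 (mark_fo i p x) (mark_fo i p' y)) {..<length x} {..<length y}"
      if i: "i \<in> {..<K1} - U1" for i
    proof (rule rel_set_of_class_pairs[where f = "\<lambda>i p. cls (insert i U1) U2 (mark_fo i p x)"
          and g = "\<lambda>i p. cls (insert i U1) U2 (mark_fo i p y)" and I = "{..<K1} - U1", OF _ i])
      show "{(i, cls (insert i U1) U2 (mark_fo i p x)) | i p. i \<in> {..<K1} - U1 \<and> p \<in> {..<length x}} =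
          {(i, cls (insert i U1) U2 (mark_fo i p y)) | i p. i \<in> {..<K1} - U1 \<and> p \<in> {..<length y}}"
        using e unfolding FO_def by simp
    qed (use i ef_class_eq_iff[OF admissible_mark_fo[OF ax] admissible_mark_fo[OF ay]] in \<open>auto simp: cls_def\<close>)
    moreover have "rel_set (\<lambda>bs bs'. ef_equiv K1 K2 q U1 (insert X U2) (mark_so X bs x) (mark_so X bs' y))
        {bs. length bs = length x} {bs. length bs = length y}" if X: "X \<in> {..<K2} - U2" for X
    proof (rule rel_set_of_class_pairs[where f = "\<lambda>X bs. cls U1 (insert X U2) (mark_so X bs x)"
          and g = "\<lambda>X bs. cls U1 (insert X U2) (mark_so X bs y)" and I = "{..<K2} - U2", OF _ X])
      show "{(X, cls U1 (insert X U2) (mark_so X bs x)) | X bs. X \<in> {..<K2} - U2 \<and> bs \<in> {bs. length bs = length x}} =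
          {(X, cls U1 (insert X U2) (mark_so X bs y)) | X bs. X \<in> {..<K2} - U2 \<and> bs \<in> {bs. length bs = length y}}"
        using e unfolding SO_def by simp
    qed (use ef_class_eq_iff[OF admissible_mark_so[OF ax] admissible_mark_so[OF ay]] in \<open>auto simp: cls_def\<close>)
    ultimately have "ef_equiv K1 K2 (Suc q) U1 U2 x y" using e by (simp add: ef_round_def)
    then show "ef_class K1 K2 \<Sigma> (Suc q) U1 U2 x = ef_class K1 K2 \<Sigma> (Suc q) U1 U2 y"
      using ef_class_eq_iff ax ay by blast
  next
    have "FO m \<subseteq> FOS" if "admissible \<Sigma> U1 U2 m" for m
      unfolding FO_def FOS_def using admissible_mark_fo[OF that] by blast
    moreover have "SO m \<subseteq> SOS" if "admissible \<Sigma> U1 U2 m" for m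
      unfolding SO_def SOS_def using admissible_mark_so[OF that] by blast
    ultimately have "(\<lambda>m. (marked m, FO m, SO m)) ` {m. admissible \<Sigma> U1 U2 m} \<subseteq>
        marked ` {m. admissible \<Sigma> U1 U2 m} \<times> Pow FOS \<times> Pow SOS"
      by blast
    moreover have "finite FOS" "finite SOS" unfolding FOS_def SOS_def cls_def using Suc by auto
    ultimately show "finite ((\<lambda>m. (marked m, FO m, SO m)) ` {m. admissible \<Sigma> U1 U2 m})"
      using finite_marked_images[OF Suc.prems] by (simp add: finite_subset)
  qed
qed

definition cell_pow :: "cell list \<Rightarrow> nat \<Rightarrow> cell list" where
  "cell_pow B k = concat (replicate k B)"

definition unannotated :: "cell list \<Rightarrow> bool" where
  "unannotated B \<longleftrightarrow> (\<forall>c \<in> set B. fo_of c = {} \<and> so_of c = {})"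

lemma cell_pow_add: "cell_pow B (a + b) = cell_pow B a @ cell_pow B b"
  by (simp add: cell_pow_def replicate_add)

lemma admissible_cell_pow:
  assumes "set (map fst B) \<subseteq> \<Sigma>" "unannotated B"
  shows "admissible \<Sigma> U1 U2 (cell_pow B k)"
proof -
  have "set (cell_pow B k) \<subseteq> set B" by (auto simp: cell_pow_def)
  then have "\<forall>c \<in> set (cell_pow B k). fo_of c = {} \<and> so_of c = {}" "set (map fst (cell_pow B k)) \<subseteq> \<Sigma>"
    using assms unfolding unannotated_def by auto
  then show ?thesis
    unfolding admissible_def well_marked_def fo_functional_def fo_vars_def so_vars_def by (auto dest!: nth_mem)
qed

text \<open>By pigeonhole two powers \<open>i < j \<le> N\<close> of \<open>B\<close> are equivalent, and \<open>j - i\<close>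
  divides \<open>N!\<close>, so composing the equivalence with itself shifts any exponent \<open>\<ge> N\<close> by \<open>N!\<close>.\<close>
lemma ef_equiv_cell_pow_pump:
  assumes "finite \<Sigma>" "finite U1" "finite U2" "set (map fst B) \<subseteq> \<Sigma>" "unannotated B"
    and "card (ef_class K1 K2 \<Sigma> q U1 U2 ` {m. admissible \<Sigma> U1 U2 m}) \<le> N" "N \<le> x" "fact N dvd k"
  shows "ef_equiv K1 K2 q U1 U2 (cell_pow B x) (cell_pow B (x + k))"
proof -
  define f where "f k = ef_class K1 K2 \<Sigma> q U1 U2 (cell_pow B k)" for k
  have adm: "admissible \<Sigma> U1 U2 (cell_pow B k)" for k
    using admissible_cell_pow[OF assms(4,5)] .
  have sub: "f ` {0..N} \<subseteq> ef_class K1 K2 \<Sigma> q U1 U2 ` {m. admissible \<Sigma> U1 U2 m}"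
    unfolding f_def using adm by blast
  have "card (f ` {0..N}) \<le> N"
    using card_mono[OF finite_ef_classes[OF assms(1-3)] sub] assms(6) by linarith
  then have "card (f ` {0..N}) < card {0..N}" by simp
  then have "\<not> inj_on f {0..N}" by (rule pigeonhole)
  then obtain a b where ab: "a \<in> {0..N}" "b \<in> {0..N}" "a \<noteq> b" "f a = f b"
    unfolding inj_on_def by blast
  define i where "i = min a b"
  define j where "j = max a b"
  have "i < j" "j \<le> N" "f i = f j" using ab by (auto simp: i_def j_def min_def max_def)
  then have ij: "i < j" "j \<le> N" "ef_equiv K1 K2 q U1 U2 (cell_pow B i) (cell_pow B j)"
    using ef_class_eq_iff[OF adm adm] unfolding f_def by blast+
  have "j - i dvd fact N" using ij by (intro dvd_fact) auto
  then obtain c where c: "k = (j - i) * c" using assms(8) dvd_trans by blast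
  have step: "ef_equiv K1 K2 q U1 U2 (cell_pow B (i + y)) (cell_pow B (j + y))" for y
    unfolding cell_pow_add by (rule ef_equiv_append[OF ij(3) ef_equiv_refl])
  have "ef_equiv K1 K2 q U1 U2 (cell_pow B x) (cell_pow B (x + (j - i) * c'))" for c'
  proof (induction c')
    case 0
    then show ?case by (simp add: ef_equiv_refl)
  next
    case (Suc c')
    have "i + (x + (j - i) * c' - i) = x + (j - i) * c'" "j + (x + (j - i) * c' - i) = x + (j - i) * Suc c'"
      using ij assms(7) by auto
    with step[of "x + (j - i) * c' - i"]
    have "ef_equiv K1 K2 q U1 U2 (cell_pow B (x + (j - i) * c')) (cell_pow B (x + (j - i) * Suc c'))"
      by simp
    with Suc.IH show ?case by (rule ef_equiv_trans)
  qed
  then show ?thesis using c by simp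
qed

section \<open>Hypotheses on annotated words\<close>

definition point_cell :: "(nat \<Rightarrow> nat) \<Rightarrow> nat \<Rightarrow> nat \<Rightarrow> nat list \<Rightarrow> nat \<Rightarrow> cell" where
  "point_cell L u1 u2 vs p = (L p, {i. i < length vs + 2 \<and> assign u1 u2 vs i = p}, {})"

lemma ef_equiv_hyp:
  assumes w: "w = map L [1..<n+1]"
    and e: "ef_equiv K1 K2 Q {..<length vs + 2} {}
      (map (point_cell L u1 u2 vs) [1..<n+1]) (map (point_cell L u1' u2' vs) [1..<n+1])"
    and q: "qrank f \<le> Q" and hv: "has_vars f (length vs)" and K: "length vs + 2 + Q \<le> K1" "Q \<le> K2"
    and u: "u1 \<in> univ w" "u2 \<in> univ w" "u1' \<in> univ w" "u2' \<in> univ w" "set vs \<subseteq> univ w"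
  shows "hyp w f vs u1 u2 \<longleftrightarrow> hyp w f vs u1' u2'"
proof -
  have lw: "length w = n" using w by simp
  have wm: "well_marked {..<length vs + 2} {} (map (point_cell L a b vs) [1..<n+1])" for a b
    unfolding well_marked_def fo_functional_def fo_vars_def so_vars_def by (auto simp: point_cell_def simp del: upt_Suc)
  have enc: "encodes (map (point_cell L a b vs) [1..<n+1]) w (assign a b vs) (\<lambda>_. {}) id id (fv1 f) (fv2 f)"
    if ab: "a \<in> univ w" "b \<in> univ w" for a b
  proof -
    have "assign a b vs x \<in> univ w \<and> x \<in> fo_of (map (point_cell L a b vs) [1..<n+1] ! (assign a b vs x - 1))"
      if x: "x \<in> fv1 f" for x
    proof -
      have xl: "x < length vs + 2" using hv x unfolding has_vars_def by auto
      then have au: "assign a b vs x \<in> univ w" using ab u(5) by (auto simp: assign_def)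
      then have "map (point_cell L a b vs) [1..<n+1] ! (assign a b vs x - 1) = point_cell L a b vs (assign a b vs x)"
        using lw by (auto simp: univ_def simp del: upt_Suc)
      then show ?thesis using au xl by (simp add: point_cell_def)
    qed
    moreover have "fv2 f = {}" using hv unfolding has_vars_def by auto
    ultimately show ?thesis unfolding encodes_def using w by (simp add: point_cell_def)
  qed
  have "sat w (assign u1 u2 vs) (\<lambda>_. {}) f \<longleftrightarrow> sat w (assign u1' u2' vs) (\<lambda>_. {}) f"
  proof (rule ef_equiv_sat[OF e q wm wm])
    show "Q \<le> card ({..<K1} - {..<length vs + 2})" "Q \<le> card ({..<K2} - {})" using K by simp_all
    show "id ` fv2 f \<subseteq> {}" using hv by (simp add: has_vars_def)
  qed (use enc u in auto)
  then show ?thesis by (simp add: hyp_def)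
qed

section \<open>Periodic words\<close>

abbreviation zero_cell :: cell where "zero_cell \<equiv> (0, {}, {})"
abbreviation one_cell :: cell where "one_cell \<equiv> (1, {}, {})"

definition periodic_cell :: "nat \<Rightarrow> nat \<Rightarrow> nat \<Rightarrow> cell" where
  "periodic_cell D r p = (if p mod D = r then one_cell else zero_cell)"

definition period_cells :: "nat \<Rightarrow> cell list" where
  "period_cells D = one_cell # replicate (D - 1) zero_cell"

definition period_with :: "nat \<Rightarrow> nat \<Rightarrow> cell \<Rightarrow> cell list" where
  "period_with D a c = one_cell # replicate (a - 1) zero_cell @ c # replicate (D - 1 - a) zero_cell"

lemma mod_add_neq: "(s::nat) mod D = r \<Longrightarrow> 0 < t \<Longrightarrow> t < D \<Longrightarrow> (s + t) mod D \<noteq> r"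
proof
  assume "s mod D = r" "0 < t" "t < D" "(s + t) mod D = r"
  then have "D dvd (s + t) - s" using mod_eq_dvd_iff_nat[of s "s + t" D] by simp
  with \<open>0 < t\<close> \<open>t < D\<close> show False by (simp add: nat_dvd_not_less)
qed

lemma upt_append: "a \<le> b \<Longrightarrow> b \<le> c \<Longrightarrow> [a..<c] = [a..<b] @ [b..<c]"
  using upt_add_eq_append[of a b "c - b"] by simp

lemma map_upt_const: "(\<And>p. s \<le> p \<Longrightarrow> p < s + l \<Longrightarrow> F p = c) \<Longrightarrow> map F [s..<s + l] = replicate l c"
  by (rule replicate_eqI) auto

lemma periodic_cell_zero: "s mod D = r \<Longrightarrow> s < p \<Longrightarrow> p < s + D \<Longrightarrow> periodic_cell D r p = zero_cell"
  using mod_add_neq[of s D r "p - s"] by (simp add: periodic_cell_def)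

lemma map_periodic_period:
  assumes "s mod D = r" "1 \<le> D" "\<And>p. s \<le> p \<Longrightarrow> p < s + D \<Longrightarrow> F p = periodic_cell D r p"
  shows "map F [s..<s + D] = period_cells D"
proof -
  have "[s..<s + D] = s # [s + 1..<s + 1 + (D - 1)]" using assms(2) by (simp add: upt_conv_Cons)
  moreover have "map F [s + 1..<s + 1 + (D - 1)] = replicate (D - 1) zero_cell"
    using assms periodic_cell_zero[OF assms(1)] by (intro map_upt_const) auto
  ultimately show ?thesis using assms by (simp add: period_cells_def periodic_cell_def)
qed

lemma map_periodic_cell_pow:
  assumes "s mod D = r" "1 \<le> D" "\<And>p. s \<le> p \<Longrightarrow> p < s + m * D \<Longrightarrow> F p = periodic_cell D r p"
  shows "map F [s..<s + m * D] = cell_pow (period_cells D) m"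
  using assms(1,3)
proof (induction m arbitrary: s)
  case 0
  then show ?case by (simp add: cell_pow_def)
next
  case (Suc m)
  have "[s..<s + Suc m * D] = [s..<s + D] @ [s + D..<s + D + m * D]"
    using upt_append[of s "s + D" "s + D + m * D"] by (simp add: algebra_simps)
  moreover have "map F [s..<s + D] = period_cells D"
    using Suc.prems assms(2) by (intro map_periodic_period) auto
  moreover have "map F [s + D..<s + D + m * D] = cell_pow (period_cells D) m"
    using Suc.prems by (intro Suc.IH) auto
  ultimately show ?case by (simp add: cell_pow_def)
qed

lemma map_period_with:
  assumes "s mod D = r" "0 < a" "a < D"
    and "\<And>p. s \<le> p \<Longrightarrow> p < s + D \<Longrightarrow> p \<noteq> s + a \<Longrightarrow> F p = periodic_cell D r p"
  shows "map F [s..<s + D] = period_with D a (F (s + a))"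
proof -
  have "[s..<s + D] = [s] @ [s + 1..<s + 1 + (a - 1)] @ [s + a] @ [Suc (s + a)..<Suc (s + a) + (D - 1 - a)]"
    using assms(2,3) upt_append[of s "s + a" "s + D"] upt_append[of "s + a" "Suc (s + a)" "s + D"]
    by (simp add: upt_conv_Cons)
  moreover have "map F [s + 1..<s + 1 + (a - 1)] = replicate (a - 1) zero_cell"
    by (rule map_upt_const) (use assms periodic_cell_zero[OF assms(1)] in auto)
  moreover have "map F [Suc (s + a)..<Suc (s + a) + (D - 1 - a)] = replicate (D - 1 - a) zero_cell"
    by (rule map_upt_const) (use assms periodic_cell_zero[OF assms(1)] in auto)
  ultimately show ?thesis using assms by (simp add: period_with_def periodic_cell_def)
qed

lemma map_two_periods_with:
  assumes "e mod D = r" "0 < a" "a < D" "0 < b" "b < D"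
    and "\<And>p. e \<le> p \<Longrightarrow> p < e + (m1 + 2 + m2) * D \<Longrightarrow> p \<noteq> e + m1 * D + a \<Longrightarrow> p \<noteq> e + m1 * D + D + b \<Longrightarrow>
      F p = periodic_cell D r p"
  shows "map F [e..<e + (m1 + 2 + m2) * D] = cell_pow (period_cells D) m1 @
    period_with D a (F (e + m1 * D + a)) @ period_with D b (F (e + m1 * D + D + b)) @ cell_pow (period_cells D) m2"
proof -
  define s where "s = e + m1 * D"
  have len: "e + (m1 + 2 + m2) * D = s + D + D + m2 * D" by (simp add: s_def algebra_simps)
  have "e \<le> s" by (simp add: s_def)
  then have "[e..<e + (m1 + 2 + m2) * D] = [e..<s] @ [s..<s + D] @ [s + D..<s + D + D] @ [s + D + D..<s + D + D + m2 * D]"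
    unfolding len using upt_append[of e s "s + D + D + m2 * D"] upt_append[of s "s + D" "s + D + D + m2 * D"]
      upt_append[of "s + D" "s + D + D" "s + D + D + m2 * D"] by simp
  moreover have "map F [e..<s] = cell_pow (period_cells D) m1"
    unfolding s_def
    by (rule map_periodic_cell_pow) (use assms in \<open>auto simp: s_def algebra_simps\<close>)
  moreover have "map F [s + D + D..<s + D + D + m2 * D] = cell_pow (period_cells D) m2"
    by (rule map_periodic_cell_pow) (use assms in \<open>auto simp: s_def algebra_simps\<close>)
  moreover have "map F [s..<s + D] = period_with D a (F (s + a))"
    by (rule map_period_with) (use assms in \<open>auto simp: s_def algebra_simps\<close>)
  moreover have "map F [s + D..<s + D + D] = period_with D b (F (s + D + b))"
    by (rule map_period_with) (use assms in \<open>auto simp: s_def algebra_simps\<close>)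
  ultimately show ?thesis by (simp add: s_def)
qed

lemma ef_equiv_period_with:
  "ef_equiv K1 K2 q U1 U2 (replicate (a - 1) zero_cell) (replicate (a' - 1) zero_cell) \<Longrightarrow>
   ef_equiv K1 K2 q U1 U2 (replicate (D - 1 - a) zero_cell) (replicate (D' - 1 - a') zero_cell) \<Longrightarrow>
   ef_equiv K1 K2 q U1 U2 (period_with D a c) (period_with D' a' c)"
  using ef_equiv_append[OF ef_equiv_refl[of K1 K2 q U1 U2 "[one_cell]"]
      ef_equiv_append[OF _ ef_equiv_append[OF ef_equiv_refl[of K1 K2 q U1 U2 "[c]"]]]]
  by (simp add: period_with_def)

lemma ef_equiv_zeros_pump:
  assumes "finite \<Sigma>" "finite U1" "finite U2" "0 \<in> \<Sigma>"
    and "card (ef_class K1 K2 \<Sigma> q U1 U2 ` {m. admissible \<Sigma> U1 U2 m}) \<le> N" "N \<le> x" "fact N dvd k"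
  shows "ef_equiv K1 K2 q U1 U2 (replicate x zero_cell) (replicate (x + k) zero_cell)"
proof -
  have "ef_equiv K1 K2 q U1 U2 (cell_pow [zero_cell] x) (cell_pow [zero_cell] (x + k))"
    using assms by (intro ef_equiv_cell_pow_pump) (auto simp: unannotated_def)
  then show ?thesis by (simp add: cell_pow_def)
qed

lemma ef_equiv_period_cells_pump:
  assumes "finite \<Sigma>" "finite U1" "finite U2" "{0, 1} \<subseteq> \<Sigma>"
    and "card (ef_class K1 K2 \<Sigma> q U1 U2 ` {m. admissible \<Sigma> U1 U2 m}) \<le> N" "N \<le> x" "fact N dvd k"
  shows "ef_equiv K1 K2 q U1 U2 (cell_pow (period_cells D) x) (cell_pow (period_cells D) (x + k))"
  using assms by (intro ef_equiv_cell_pow_pump) (auto simp: unannotated_def period_cells_def)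

section \<open>Runs of local-access algorithms\<close>

fun blank_answer :: "nat \<Rightarrow> query \<Rightarrow> answer" where
  "blank_answer n (QLabel p) = ALabel 0"
| "blank_answer n (QSucc p) = APos (if p < n then Some (Suc p) else None)"
| "blank_answer n (QPred p) = APos (if 1 < p then Some (p - 1) else None)"

fun blank_run :: "algorithm \<Rightarrow> (nat \<times> nat \<times> bool) set \<Rightarrow> nat \<Rightarrow> nat \<Rightarrow> answer list" where
  "blank_run A T n 0 = []"
| "blank_run A T n (Suc k) =
    (case A T (blank_run A T n k) of Ask q \<Rightarrow> blank_run A T n k @ [blank_answer n q] | Output f vs \<Rightarrow> blank_run A T n k)"

lemma valid_run_take_eq:
  assumes "valid_run A w T h" "valid_run A w T h'" "i \<le> length h" "i \<le> length h'"
  shows "take i h = take i h'"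
  using assms(3,4)
proof (induction i)
  case (Suc i)
  obtain q where q: "A T (take i h) = Ask q" "h ! i = answer_of w q"
    using assms(1) Suc.prems unfolding valid_run_def by (meson Suc_le_lessD)
  obtain q' where q': "A T (take i h') = Ask q'" "h' ! i = answer_of w q'"
    using assms(2) Suc.prems unfolding valid_run_def by (meson Suc_le_lessD)
  have "take i h = take i h'" using Suc by simp
  with q q' have "take i h = take i h'" "h ! i = h' ! i" by simp_all
  then show ?case using Suc.prems by (simp add: take_Suc_conv_app_nth)
qed simp

lemma run_outputs_unique: "run_outputs A w T h f vs \<Longrightarrow> run_outputs A w T h' f' vs' \<Longrightarrow> h = h'"
proof -
  have halt: "length h \<le> length h'" if "run_outputs A w T h f vs" "run_outputs A w T h' f' vs'"
    for h h' f f' vs vs'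
  proof (rule ccontr)
    assume less: "\<not> length h \<le> length h'"
    have v: "valid_run A w T h" "valid_run A w T h'" "A T h' = Output f' vs'"
      using that unfolding run_outputs_def by auto
    have "take (length h') h = h'" using valid_run_take_eq[OF v(1,2), of "length h'"] less by simp
    moreover obtain q where "A T (take (length h') h) = Ask q"
      using v(1) less unfolding valid_run_def by (meson not_le)
    ultimately show False using v(3) by simp
  qed
  assume "run_outputs A w T h f vs" "run_outputs A w T h' f' vs'"
  moreover from this have "length h = length h'" using halt by (meson le_antisym)
  ultimately show "h = h'" using valid_run_take_eq[of A w T h h' "length h"] unfolding run_outputs_def by simp
qed

lemma held_subset_univ:
  assumes "training_set w T" "valid_run A w T h" "i \<le> length h"
  shows "held T (take i h) \<subseteq> univ w"
  using assms(3)
proof (induction i)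
  case 0
  then show ?case using assms(1) unfolding held_def training_set_def by auto
next
  case (Suc i)
  obtain q where q: "A T (take i h) = Ask q" "qpos q \<in> held T (take i h)" "h ! i = answer_of w q"
    using assms(2) Suc.prems unfolding valid_run_def by (meson Suc_le_lessD)
  have "qpos q \<in> univ w" using Suc q(2) by auto
  then have "p \<in> univ w" if "answer_of w q = APos (Some p)" for p
    using that by (cases q) (auto simp: univ_def split: if_splits)
  moreover have "held T (take (Suc i) h) = held T (take i h) \<union> {p. h ! i = APos (Some p)}"
    using Suc.prems unfolding held_def by (auto simp: take_Suc_conv_app_nth)
  ultimately show ?case using Suc q(3) by auto
qed

lemma valid_run_eq_blank_run:
  assumes "valid_run A w T h" "training_set w T" "length w = n"
    and "\<And>i p. i < length h \<Longrightarrow> A T (blank_run A T n i) = Ask (QLabel p) \<Longrightarrow> p \<in> univ w \<Longrightarrow> w ! (p - 1) = 0"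
    and "i \<le> length h"
  shows "take i h = blank_run A T n i"
  using assms(5)
proof (induction i)
  case (Suc i)
  then have i: "i < length h" by simp
  obtain q where q: "A T (take i h) = Ask q" "qpos q \<in> held T (take i h)" "h ! i = answer_of w q"
    using assms(1) i unfolding valid_run_def by blast
  have t: "take i h = blank_run A T n i" using Suc by simp
  have "qpos q \<in> univ w" using held_subset_univ[OF assms(2,1), of i] i q(2) by auto
  then have "answer_of w q = blank_answer n q"
    using assms(3) assms(4)[OF i] q(1) t by (cases q) auto
  then show ?case using t q i by (simp add: take_Suc_conv_app_nth)
qed simp

lemma blank_run_stable:
  assumes "A T (blank_run A T n k) = Output f vs" "k \<le> k'"
  shows "blank_run A T n k' = blank_run A T n k"
  using assms(2)
proof (induction k' rule: dec_induct)
  case (step k')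
  then show ?case using assms(1) by simp
qed simp

definition blank_queries :: "algorithm \<Rightarrow> (nat \<times> nat \<times> bool) set \<Rightarrow> nat \<Rightarrow> nat \<Rightarrow> nat set" where
  "blank_queries A T n G = {p. \<exists>i < G. A T (blank_run A T n i) = Ask (QLabel p)}"

lemma blank_queries_subset_image:
  "blank_queries A T n G \<subseteq> (\<lambda>i. case A T (blank_run A T n i) of Ask (QLabel p) \<Rightarrow> p | _ \<Rightarrow> 0) ` {..<G}"
  unfolding blank_queries_def by force

lemma finite_blank_queries: "finite (blank_queries A T n G)"
  by (rule finite_surj[OF finite_lessThan blank_queries_subset_image])

lemma card_blank_queries_le: "card (blank_queries A T n G) \<le> G"
proof -
  have "card (blank_queries A T n G) \<le> card ((\<lambda>i. case A T (blank_run A T n i) of Ask (QLabel p) \<Rightarrow> p | _ \<Rightarrow> 0) ` {..<G})"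
    by (rule card_mono[OF finite_imageI[OF finite_lessThan] blank_queries_subset_image])
  also have "\<dots> \<le> G" using card_image_le[of "{..<G}"] by simp
  finally show ?thesis .
qed

lemma valid_run_short_eq_blank_run:
  assumes run: "valid_run A w T h" "training_set w T" "length w = n" "length h \<le> G"
    and zero: "\<And>p. p \<in> univ w \<Longrightarrow> p \<in> blank_queries A T n G \<Longrightarrow> w ! (p - 1) = 0"
  shows "blank_run A T n (length h) = h"
proof -
  have "take (length h) h = blank_run A T n (length h)"
  proof (rule valid_run_eq_blank_run[OF run(1-3)])
    fix i p assume "i < length h" "A T (blank_run A T n i) = Ask (QLabel p)" "p \<in> univ w"
    then show "w ! (p - 1) = 0" using zero run(4) unfolding blank_queries_def by fastforce
  qed simp
  then show ?thesis by simp
qed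

section \<open>The hard instance\<close>

text \<open>Variables \<open>0\<close>, \<open>1\<close>, \<open>2\<close>, \<open>3\<close> are \<open>x1\<close>, \<open>x2\<close>, \<open>y\<close>, \<open>z\<close>.\<close>
definition phi :: mso where
  "phi = Ex1 3 (Conj (Less 0 3) (Conj (Less 3 1) (Conj (Lab 1 3) (Neg (Eq 3 2)))))"

lemma existential_fo_1param_phi: "existential_fo_1param phi"
  unfolding existential_fo_1param_def has_vars_def phi_def
  by (auto intro!: exI[of _ "[3]"])

lemma hyp_phi_iff: "hyp w phi [v] u1 u2 \<longleftrightarrow> (\<exists>z. 1 \<le> z \<and> z \<le> length w \<and> u1 < z \<and> z < u2 \<and> w ! (z - 1) = 1 \<and> z \<noteq> v)"
  unfolding hyp_def phi_def by (auto simp: assign_def univ_def) (metis Suc_leI gr_zeroI less_zeroE)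

lemma mult_add_mod_self: "y < (d::nat) \<Longrightarrow> (X * d + y) mod d = y"
  by simp

lemma add_less_mult: "y < d \<Longrightarrow> X < Y \<Longrightarrow> X * d + y < Y * (d::nat)"
proof -
  assume a: "y < d" "X < Y"
  have "X * d + y < (X + 1) * d" using a by simp
  also have "\<dots> \<le> Y * d" using a by (intro mult_le_mono1) simp
  finally show ?thesis .
qed

text \<open>Group \<open>j\<close>
  occupies the periods from \<open>j * S\<close> on; its positive pair encloses the residues \<open>[Wd, (K + 1) * Wd)\<close>
  of period \<open>j * S\<close>, its negative pair the residues \<open>[j * Wd, (j + 1) * Wd)\<close> of period
  \<open>j * S + M0\<close>, so for \<open>r\<close> in the stripe of group \<open>j\<close> only the negative pair of group \<open>j\<close>
  encloses a 1, namely its witness.\<close>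
locale hard_instance =
  fixes K Wd NB :: nat
  assumes K_pos: "1 \<le> K" and width: "4 * NB + 8 \<le> Wd" and fact_dvd_width: "(fact NB :: nat) dvd Wd"
begin

abbreviation M0 :: nat where "M0 \<equiv> fact NB"
definition D :: nat where "D = (K + 2) * Wd"
definition S :: nat where "S = 2 * NB + M0 + 4"
definition pos_l :: "nat \<Rightarrow> nat" where "pos_l j = j * S * D + Wd - 1"
definition pos_r :: "nat \<Rightarrow> nat" where "pos_r j = j * S * D + (K + 1) * Wd"
definition neg_l :: "nat \<Rightarrow> nat" where "neg_l j = (j * S + M0) * D + j * Wd - 1"
definition neg_r :: "nat \<Rightarrow> nat" where "neg_r j = (j * S + M0) * D + (j + 1) * Wd"
definition len :: nat where "len = (K + 1) * S * D"
definition train :: "(nat \<times> nat \<times> bool) set" where "train = (\<lambda>j. (pos_l j, pos_r j, True)) ` {1..K} \<union> (\<lambda>j. (neg_l j, neg_r j, False)) ` {1..K}"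
definition letter :: "nat \<Rightarrow> nat \<Rightarrow> nat" where "letter r p = (if p mod D = r then 1 else 0)"
definition word :: "nat \<Rightarrow> nat list" where "word r = map (letter r) [1..<len+1]"
definition stripe :: "nat \<Rightarrow> nat set" where "stripe j = {j * Wd + NB + 1 .. (j + 1) * Wd - NB - 2}"
definition region :: "nat \<Rightarrow> nat set" where "region j = {(j * S - NB - 1) * D ..< (j * S + NB + M0 + 2) * D}"
definition witness :: "nat \<Rightarrow> nat \<Rightarrow> nat" where "witness j r = (j * S + M0) * D + r"

lemma period_ge: "3 * Wd \<le> D" using K_pos by (simp add: D_def)

lemma length_word [simp]: "length (word r) = len"
  by (simp add: word_def)

lemma nth_word: "1 \<le> p \<Longrightarrow> p \<le> len \<Longrightarrow> word r ! (p - 1) = letter r p"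
  unfolding word_def by (simp del: upt_Suc)

lemma stripe_bounds: "j \<in> {1..K} \<Longrightarrow> r \<in> stripe j \<Longrightarrow> Wd + NB + 1 \<le> r \<and> r + NB + 2 \<le> (j + 1) * Wd \<and> j * Wd + NB + 1 \<le> r \<and> r < D \<and> r < (K + 1) * Wd"
proof -
  assume j: "j \<in> {1..K}" and r: "r \<in> stripe j"
  have a: "j * Wd + NB + 1 \<le> r" "r \<le> (j + 1) * Wd - NB - 2" using r by (auto simp: stripe_def)
  have "Wd \<le> j * Wd" using j by simp
  moreover have "(j + 1) * Wd \<le> (K + 1) * Wd" using j by simp
  moreover have "NB + 2 \<le> (j + 1) * Wd" using j width by (simp add: algebra_simps)
  moreover have "(K + 1) * Wd < D" using width by (simp add: D_def algebra_simps)
  moreover have "(j + 1) * Wd = j * Wd + Wd" by simp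
  ultimately show ?thesis using a by linarith
qed

lemma S_ge: "M0 + 1 \<le> S" "NB + 1 \<le> S" "1 \<le> S" by (auto simp: S_def)

lemma period_gt: "Wd < D" "1 \<le> D" using period_ge width by auto

lemma block_pos_less_len: "j \<le> K \<Longrightarrow> y < D \<Longrightarrow> (j * S + M0) * D + y < len"
proof -
  assume "j \<le> K" "y < D"
  moreover have "j * S + M0 < (K + 1) * S"
  proof -
    have "j * S \<le> K * S" using \<open>j \<le> K\<close> by simp
    moreover have "(K + 1) * S = K * S + S" by simp
    ultimately show ?thesis using S_ge(1) by linarith
  qed
  ultimately show ?thesis unfolding len_def using add_less_mult by (metis mult.assoc)
qed

lemma block_start_less_len: "j \<le> K \<Longrightarrow> y < D \<Longrightarrow> j * S * D + y < len"
  using block_pos_less_len[of j y] by (simp add: algebra_simps)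

lemma train_pos_univ: "j \<in> {1..K} \<Longrightarrow> pos_l j \<in> univ (word r) \<and> pos_r j \<in> univ (word r) \<and> neg_l j \<in> univ (word r) \<and> neg_r j \<in> univ (word r)"
proof -
  assume j: "j \<in> {1..K}"
  have w: "(K + 1) * Wd < D" using width by (simp add: D_def algebra_simps)
  have jW: "(j + 1) * Wd \<le> (K + 1) * Wd" using j by simp
  have "pos_l j = j * S * D + (Wd - 1)" using width by (simp add: pos_l_def)
  then have "pos_l j < len" using block_start_less_len[of j "Wd - 1"] j period_gt by simp
  moreover have "pos_r j < len" unfolding pos_r_def using block_start_less_len[of j "(K + 1) * Wd"] j w by simp
  moreover have "(j + 1) * Wd = j * Wd + Wd" by simp
  then have "j * Wd - 1 < D" using jW w by linarith
  then have "neg_l j < len" unfolding neg_l_def using block_pos_less_len[of j "j * Wd - 1"] j by (simp add: algebra_simps)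
  moreover have "(j + 1) * Wd < D" using jW w by linarith
  then have "neg_r j < len" unfolding neg_r_def using block_pos_less_len[of j "(j + 1) * Wd"] j by simp
  moreover have "1 \<le> pos_l j" "1 \<le> pos_r j" "1 \<le> neg_l j" "1 \<le> neg_r j"
  proof -
    have "Wd \<le> j * Wd" using j by simp
    then have j8: "8 \<le> j * Wd" using width by linarith
    show "1 \<le> neg_l j" unfolding neg_l_def using j8 by linarith
    show "1 \<le> pos_l j" "1 \<le> pos_r j" "1 \<le> neg_r j" using width j8 by (auto simp: pos_l_def pos_r_def neg_r_def)
  qed
  ultimately show ?thesis by (simp add: univ_def)
qed

lemma training_set_train: "training_set (word r) train"
  unfolding training_set_def train_def using train_pos_univ by auto

lemma card_train_le: "card train \<le> 2 * K"
proof -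
  have "card train \<le> card ((\<lambda>j. (pos_l j, pos_r j, True)) ` {1..K}) + card ((\<lambda>j. (neg_l j, neg_r j, False)) ` {1..K})"
    unfolding train_def by (rule card_Un_le)
  also have "\<dots> \<le> K + K" by (intro add_mono) (metis card_atLeastAtMost card_image_le diff_Suc_1 finite_atLeastAtMost)+
  finally show ?thesis by simp
qed

lemma hyp_phi_pos:
  assumes j0: "j0 \<in> {1..K}" and r: "r \<in> stripe j0" and j: "j \<in> {1..K}"
  shows "hyp (word r) phi [witness j0 r] (pos_l j) (pos_r j)"
proof -
  note cb = stripe_bounds[OF j0 r]
  define z where "z = j * S * D + r"
  have z1: "1 \<le> z" "z \<le> len" using cb j block_start_less_len[of j r] by (auto simp: z_def)
  have z2: "pos_l j < z" "z < pos_r j" using cb width by (auto simp: z_def pos_l_def pos_r_def)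
  have "z mod D = r" using mult_add_mod_self[of r D "j * S"] cb by (simp add: z_def)
  then have z3: "word r ! (z - 1) = 1" using nth_word[OF z1, of r] by (simp add: letter_def)
  have "j * S \<noteq> j0 * S + M0"
  proof (cases "j \<le> j0")
    case True
    then have "j * S \<le> j0 * S" by simp
    moreover have "1 \<le> M0" by simp
    ultimately show ?thesis by linarith
  next
    case False
    then have "(j0 + 1) * S \<le> j * S" by (intro mult_le_mono1) simp
    then show ?thesis using S_ge by (simp add: algebra_simps)
  qed
  then have "z \<noteq> witness j0 r" unfolding z_def witness_def using period_gt by simp
  then have "1 \<le> z \<and> z \<le> length (word r) \<and> pos_l j < z \<and> z < pos_r j \<and> word r ! (z - 1) = 1 \<and> z \<noteq> witness j0 r"
    using z1 z2 z3 by simp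
  then show ?thesis unfolding hyp_phi_iff by (rule exI)
qed

lemma not_hyp_phi_neg:
  assumes j0: "j0 \<in> {1..K}" and r: "r \<in> stripe j0" and j: "j \<in> {1..K}"
  shows "\<not> hyp (word r) phi [witness j0 r] (neg_l j) (neg_r j)"
proof
  note cb = stripe_bounds[OF j0 r]
  have w: "(K + 1) * Wd < D" using width by (simp add: D_def algebra_simps)
  assume "hyp (word r) phi [witness j0 r] (neg_l j) (neg_r j)"
  then obtain z where z: "1 \<le> z" "z \<le> len" "neg_l j < z" "z < neg_r j" "word r ! (z - 1) = 1" "z \<noteq> witness j0 r"
    unfolding hyp_phi_iff by auto
  define X where "X = j * S + M0"
  have jW: "1 \<le> j * Wd" using j width by simp
  have jW2: "(j + 1) * Wd \<le> (K + 1) * Wd" using j by simp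
  have zl: "X * D + j * Wd \<le> z" "z < X * D + (j + 1) * Wd" using z(3,4) jW by (auto simp: neg_l_def neg_r_def X_def)
  define y where "y = z - X * D"
  have zy: "z = X * D + y" "j * Wd \<le> y" "y < (j + 1) * Wd" using zl by (auto simp: y_def)
  have "y < D" using zy jW2 w by linarith
  then have "z mod D = y" using zy mult_add_mod_self by simp
  moreover have "letter r z = 1" using z(5) nth_word[OF z(1,2)] by simp
  ultimately have yr: "y = r" by (simp add: letter_def split: if_splits)
  have "j = j0"
  proof (rule ccontr)
    assume "j \<noteq> j0"
    then consider "j + 1 \<le> j0" | "j0 + 1 \<le> j" by linarith
    then show False
    proof cases
      case 1
      then have "(j + 1) * Wd \<le> j0 * Wd" by (intro mult_le_mono1)
      then show False using zy yr cb by linarith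
    next
      case 2
      then have "(j0 + 1) * Wd \<le> j * Wd" by (intro mult_le_mono1)
      then show False using zy yr cb by linarith
    qed
  qed
  then have "z = witness j0 r" using zy yr by (simp add: witness_def X_def)
  then show False using z(6) by simp
qed

lemma consistent_witness:
  assumes j0: "j0 \<in> {1..K}" and r: "r \<in> stripe j0"
  shows "consistent (word r) phi [witness j0 r] train"
proof -
  have "witness j0 r \<in> univ (word r)"
    unfolding witness_def univ_def using block_pos_less_len[of j0 r] j0 stripe_bounds[OF j0 r] period_gt by auto
  then show ?thesis unfolding consistent_def train_def using hyp_phi_pos[OF j0 r] not_hyp_phi_neg[OF j0 r] by auto
qed

lemma phi_consistent_train: "j0 \<in> {1..K} \<Longrightarrow> r \<in> stripe j0 \<Longrightarrow> phi_consistent (word r) phi 1 train"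
  unfolding phi_consistent_def using consistent_witness by (intro exI[of _ "[witness j0 r]"]) auto


lemma set_word: "set (word r) \<subseteq> {0, 1}"
  by (auto simp: word_def letter_def)

lemma region_disjoint: "j < j' \<Longrightarrow> region j \<inter> region j' = {}"
proof -
  assume jj: "j < j'"
  have "(j + 1) * S \<le> j' * S" using jj by (intro mult_le_mono1) simp
  then have a: "j * S + S \<le> j' * S" by simp
  have "S = 2 * NB + M0 + 4" by (rule S_def)
  then have "j * S + NB + M0 + 2 \<le> j' * S - NB - 1" using a by linarith
  then have "(j * S + NB + M0 + 2) * D \<le> (j' * S - NB - 1) * D" by (rule mult_le_mono1)
  then show ?thesis unfolding region_def by auto
qed

lemma ex_region_avoiding:
  assumes "length vs < K"
  shows "\<exists>j\<in>{1..K}. set vs \<inter> region j = {}"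
proof (rule ccontr)
  assume "\<not> ?thesis"
  then have ne: "\<forall>j\<in>{1..K}. set vs \<inter> region j \<noteq> {}" by blast
  define pick where "pick j = (SOME x. x \<in> set vs \<inter> region j)" for j
  have pk: "pick j \<in> set vs \<inter> region j" if "j \<in> {1..K}" for j
  proof -
    have "\<exists>x. x \<in> set vs \<inter> region j" using ne that by blast
    then show ?thesis unfolding pick_def by (rule someI_ex)
  qed
  have "inj_on pick {1..K}"
  proof (rule inj_onI)
    fix j j' assume a: "j \<in> {1..K}" "j' \<in> {1..K}" "pick j = pick j'"
    have x: "pick j \<in> region j" "pick j \<in> region j'" using pk[OF a(1)] pk[OF a(2)] a(3) by auto
    show "j = j'"
    proof (rule ccontr)
      assume "j \<noteq> j'"
      then have "j < j' \<or> j' < j" by linarith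
      then show False using x region_disjoint by blast
    qed
  qed
  moreover have "pick ` {1..K} \<subseteq> set vs" using pk by blast
  ultimately have "card {1..K} \<le> card (set vs)"
    using card_image card_mono finite_set by metis
  then have "K \<le> length vs" using card_length[of vs] by simp
  then show False using assms by simp
qed

lemma card_stripe: "card (stripe j) = Wd - 2 * NB - 2"
proof -
  have e: "(j + 1) * Wd = j * Wd + Wd" by simp
  show ?thesis unfolding stripe_def card_atLeastAtMost using e width by linarith
qed


lemma group_bounds:
  assumes "j \<in> {1..K}"
  shows "NB + 1 \<le> j * S" "j * S + NB + M0 + 2 \<le> (K + 1) * S"
proof -
  have "1 * S \<le> j * S" "j * S \<le> K * S" using assms by (intro mult_le_mono1; simp)+
  moreover have "(K + 1) * S = K * S + S" "NB + M0 + 2 \<le> S" by (simp_all add: S_def)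
  ultimately show "NB + 1 \<le> j * S" "j * S + NB + M0 + 2 \<le> (K + 1) * S" using S_ge by linarith+
qed

definition window_start :: "nat \<Rightarrow> nat \<Rightarrow> nat" where "window_start j r = (j * S - NB - 1) * D + r"
definition window_len :: nat where "window_len = (2 * NB + M0 + 2) * D"

lemma window_bounds:
  assumes j: "j \<in> {1..K}" and r: "r \<in> stripe j"
  shows "1 \<le> window_start j r" "window_start j r + window_len \<le> len + 1" "window_start j r mod D = r"
    "\<And>p. window_start j r \<le> p \<Longrightarrow> p < window_start j r + window_len \<Longrightarrow> p \<in> region j"
proof -
  note cb = stripe_bounds[OF j r] and jS = group_bounds[OF j]
  obtain X where X: "j * S = X + NB + 1" using jS(1) by (metis add.commute add.left_commute le_add_diff_inverse)
  have ws: "window_start j r = X * D + r" by (simp add: window_start_def X)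
  have e: "window_start j r + window_len = (X + 2 * NB + M0 + 2) * D + r"
    by (simp add: ws window_len_def algebra_simps)
  show "1 \<le> window_start j r" using cb by (simp add: ws)
  have "(X + 2 * NB + M0 + 2) * D + r < (X + 2 * NB + M0 + 3) * D" using cb by (simp add: algebra_simps)
  also have "\<dots> \<le> len" unfolding len_def using jS(2) X by (intro mult_le_mono1) linarith
  finally show "window_start j r + window_len \<le> len + 1" using e by simp
  show "window_start j r mod D = r" using cb by (simp add: ws)
  fix p assume "window_start j r \<le> p" "p < window_start j r + window_len"
  moreover have "(X + 2 * NB + M0 + 2) * D + r < (j * S + NB + M0 + 2) * D"
    using cb by (simp add: X algebra_simps)
  ultimately show "p \<in> region j" using ws e X by (simp add: region_def)
qed

lemma train_pos_in_window:
  assumes j: "j \<in> {1..K}" and r: "r \<in> stripe j"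
  shows "pos_l j = window_start j r + NB * D + (D + Wd - 1 - r)"
    "pos_r j = window_start j r + NB * D + D + ((K + 1) * Wd - r)"
    "neg_l j = window_start j r + (NB + M0) * D + (D + j * Wd - 1 - r)"
    "neg_r j = window_start j r + (NB + M0) * D + D + ((j + 1) * Wd - r)"
proof -
  note cb = stripe_bounds[OF j r]
  obtain X where X: "j * S = X + NB + 1" using group_bounds[OF j] by (metis add.commute add.left_commute le_add_diff_inverse)
  have ws: "window_start j r = X * D + r" by (simp add: window_start_def X)
  have "j * S * D = X * D + NB * D + D" by (simp add: X algebra_simps)
  then show "pos_l j = window_start j r + NB * D + (D + Wd - 1 - r)"
    "pos_r j = window_start j r + NB * D + D + ((K + 1) * Wd - r)"
    "neg_l j = window_start j r + (NB + M0) * D + (D + j * Wd - 1 - r)"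
    "neg_r j = window_start j r + (NB + M0) * D + D + ((j + 1) * Wd - r)"
    using cb by (auto simp: ws pos_l_def pos_r_def neg_l_def neg_r_def algebra_simps)
qed


lemma point_cell_periodic:
  "p \<noteq> u1 \<Longrightarrow> p \<noteq> u2 \<Longrightarrow> p \<notin> set vs \<Longrightarrow> point_cell (letter r) u1 u2 vs p = periodic_cell D r p"
  unfolding point_cell_def periodic_cell_def letter_def assign_def by (auto simp: in_set_conv_nth)

lemma point_cell_first:
  "u1 \<noteq> u2 \<Longrightarrow> u1 \<notin> set vs \<Longrightarrow> u1 mod D \<noteq> r \<Longrightarrow> point_cell (letter r) u1 u2 vs u1 = (0, {0}, {})"
  unfolding point_cell_def letter_def assign_def by (auto simp: in_set_conv_nth)

lemma point_cell_second:
  "u1 \<noteq> u2 \<Longrightarrow> u2 \<notin> set vs \<Longrightarrow> u2 mod D \<noteq> r \<Longrightarrow> point_cell (letter r) u1 u2 vs u2 = (0, {1}, {})"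
  unfolding point_cell_def letter_def assign_def by (auto simp: in_set_conv_nth)

lemma map_point_cell_window:
  assumes j: "j \<in> {1..K}" and r: "r \<in> stripe j" and vs: "set vs \<inter> region j = {}"
    and m: "m1 + 2 + m2 = 2 * NB + M0 + 2" and ab: "0 < a" "a < D" "0 < b" "b < D"
    and u: "u1 = window_start j r + m1 * D + a" "u2 = window_start j r + m1 * D + D + b"
  shows "map (point_cell (letter r) u1 u2 vs) [window_start j r..<window_start j r + window_len] =
    cell_pow (period_cells D) m1 @ period_with D a (0, {0}, {}) @ period_with D b (0, {1}, {}) @ cell_pow (period_cells D) m2"
proof -
  note wb = window_bounds[OF j r]
  have win: "window_len = (m1 + 2 + m2) * D" unfolding window_len_def m ..
  have inw: "window_start j r \<le> p \<Longrightarrow> p < window_start j r + window_len \<Longrightarrow> p \<notin> set vs" for p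
    using wb(4) vs by blast
  have "u1 = (window_start j r + a) + m1 * D" "u2 = (window_start j r + b) + (m1 + 1) * D" using u by simp_all
  then have "u1 mod D = (window_start j r + a) mod D" "u2 mod D = (window_start j r + b) mod D"
    by (metis mod_mult_self1)+
  then have "u1 \<noteq> u2" "u1 mod D \<noteq> r" "u2 mod D \<noteq> r"
    using ab u mod_add_neq[OF wb(3)] by auto
  moreover have "u1 \<notin> set vs" "u2 \<notin> set vs" using inw ab u unfolding win by (auto simp: algebra_simps)
  ultimately have "point_cell (letter r) u1 u2 vs u1 = (0, {0}, {})" "point_cell (letter r) u1 u2 vs u2 = (0, {1}, {})"
    by (simp_all add: point_cell_first point_cell_second)
  moreover have "map (point_cell (letter r) u1 u2 vs) [window_start j r..<window_start j r + (m1 + 2 + m2) * D] =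
      cell_pow (period_cells D) m1 @ period_with D a (point_cell (letter r) u1 u2 vs u1) @
      period_with D b (point_cell (letter r) u1 u2 vs u2) @ cell_pow (period_cells D) m2"
    unfolding u by (rule map_two_periods_with[OF wb(3) ab]) (use inw win u in \<open>auto intro: point_cell_periodic\<close>)
  ultimately show ?thesis unfolding win by simp
qed


lemma point_cell_same:
  "p \<noteq> u1 \<Longrightarrow> p \<noteq> u2 \<Longrightarrow> p \<noteq> u1' \<Longrightarrow> p \<noteq> u2' \<Longrightarrow> point_cell L u1 u2 vs p = point_cell L u1' u2' vs p"
  unfolding point_cell_def assign_def by auto

context
  fixes K1 K2 Q :: nat and U :: "nat set"
  assumes U: "finite U"
    and classes: "card (ef_class K1 K2 {0, 1} Q U {} ` {m. admissible {0, 1} U {} m}) \<le> NB"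
begin

lemma ef_equiv_zeros_shift:
  "NB \<le> x \<Longrightarrow> Wd dvd k \<Longrightarrow> ef_equiv K1 K2 Q U {} (replicate x zero_cell) (replicate (x + k) zero_cell)"
  by (rule ef_equiv_zeros_pump[OF _ U _ _ classes]) (use fact_dvd_width dvd_trans in auto)

lemma ef_equiv_window:
  assumes j: "j \<in> {1..K}" and r: "r \<in> stripe j"
  shows "ef_equiv K1 K2 Q U {}
    (cell_pow (period_cells D) NB @ period_with D (D + Wd - 1 - r) c1 @ period_with D ((K + 1) * Wd - r) c2 @
      cell_pow (period_cells D) (NB + M0))
    (cell_pow (period_cells D) (NB + M0) @ period_with D (D + j * Wd - 1 - r) c1 @ period_with D ((j + 1) * Wd - r) c2 @
      cell_pow (period_cells D) NB)"
proof -
  note cb = stripe_bounds[OF j r]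
  have D: "D = (K + 2) * Wd" by (fact D_def)
  have jK: "Wd \<le> j * Wd" "j * Wd \<le> K * Wd" using j by simp_all
  have pow: "ef_equiv K1 K2 Q U {} (cell_pow (period_cells D) NB) (cell_pow (period_cells D) (NB + M0))"
    by (rule ef_equiv_period_cells_pump[OF _ U _ _ classes]) simp_all
  define x where "x = j * Wd"
  define y where "y = K * Wd"
  have xy: "D = y + 2 * Wd" "(K + 1) * Wd = y + Wd" "(j + 1) * Wd = x + Wd" "Wd \<le> x" "x \<le> y"
    "x + NB + 1 \<le> r" "r + NB + 2 \<le> x + Wd" "Wd dvd x - Wd" "Wd dvd y - x"
    using cb jK by (auto simp: x_def y_def D algebra_simps intro!: dvd_diff_nat)
  then have eqs: "D + x - 1 - r - 1 = (D + Wd - 1 - r - 1) + (x - Wd)"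
    "D - 1 - (D + Wd - 1 - r) = (D - 1 - (D + x - 1 - r)) + (x - Wd)"
    "(y + Wd) - r - 1 = ((x + Wd) - r - 1) + (y - x)"
    "D - 1 - ((x + Wd) - r) = (D - 1 - ((y + Wd) - r)) + (y - x)"
    "NB \<le> D + Wd - 1 - r - 1" "NB \<le> D - 1 - (D + x - 1 - r)" "NB \<le> (x + Wd) - r - 1"
    "NB \<le> D - 1 - ((y + Wd) - r)"
    using width by linarith+
  have "ef_equiv K1 K2 Q U {} (period_with D (D + Wd - 1 - r) c1) (period_with D (D + x - 1 - r) c1)"
  proof (rule ef_equiv_period_with)
    show "ef_equiv K1 K2 Q U {} (replicate (D + Wd - 1 - r - 1) zero_cell) (replicate (D + x - 1 - r - 1) zero_cell)"
      unfolding eqs(1) using eqs(5) xy(8) by (rule ef_equiv_zeros_shift)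
    show "ef_equiv K1 K2 Q U {} (replicate (D - 1 - (D + Wd - 1 - r)) zero_cell) (replicate (D - 1 - (D + x - 1 - r)) zero_cell)"
      unfolding eqs(2) using ef_equiv_sym[OF ef_equiv_zeros_shift[OF eqs(6) xy(8)]] .
  qed
  moreover have "ef_equiv K1 K2 Q U {} (period_with D ((y + Wd) - r) c2) (period_with D ((x + Wd) - r) c2)"
  proof (rule ef_equiv_period_with)
    show "ef_equiv K1 K2 Q U {} (replicate (y + Wd - r - 1) zero_cell) (replicate (x + Wd - r - 1) zero_cell)"
      unfolding eqs(3) using ef_equiv_sym[OF ef_equiv_zeros_shift[OF eqs(7) xy(9)]] .
    show "ef_equiv K1 K2 Q U {} (replicate (D - 1 - (y + Wd - r)) zero_cell) (replicate (D - 1 - (x + Wd - r)) zero_cell)"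
      unfolding eqs(4) using eqs(8) xy(9) by (rule ef_equiv_zeros_shift)
  qed
  ultimately show ?thesis
    using pow ef_equiv_sym[OF pow] unfolding xy(2,3) x_def by (intro ef_equiv_append)
qed

end


lemma ef_equiv_pos_neg:
  assumes j: "j \<in> {1..K}" and r: "r \<in> stripe j" and vs: "set vs \<inter> region j = {}"
    and classes: "card (ef_class K1 K2 {0, 1} Q {..<length vs + 2} {} ` {m. admissible {0, 1} {..<length vs + 2} {} m}) \<le> NB"
  shows "ef_equiv K1 K2 Q {..<length vs + 2} {}
    (map (point_cell (letter r) (pos_l j) (pos_r j) vs) [1..<len + 1])
    (map (point_cell (letter r) (neg_l j) (neg_r j) vs) [1..<len + 1])"
proof -
  note cb = stripe_bounds[OF j r] and wb = window_bounds[OF j r] and tp = train_pos_in_window[OF j r]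
  define e where "e = window_start j r"
  define F1 where "F1 = point_cell (letter r) (pos_l j) (pos_r j) vs"
  define F2 where "F2 = point_cell (letter r) (neg_l j) (neg_r j) vs"
  have "j * Wd \<le> K * Wd" "(j + 1) * Wd = j * Wd + Wd" "(K + 1) * Wd = K * Wd + Wd" "D = K * Wd + 2 * Wd"
    using j by (simp_all add: D_def algebra_simps)
  then have offsets: "0 < D + Wd - 1 - r" "D + Wd - 1 - r < D" "0 < (K + 1) * Wd - r" "(K + 1) * Wd - r < D"
    "0 < D + j * Wd - 1 - r" "D + j * Wd - 1 - r < D" "0 < (j + 1) * Wd - r" "(j + 1) * Wd - r < D"
    using cb by (simp_all only:) linarith+
  have mid: "ef_equiv K1 K2 Q {..<length vs + 2} {} (map F1 [e..<e + window_len]) (map F2 [e..<e + window_len])"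
  proof -
    have "map F1 [e..<e + window_len] = cell_pow (period_cells D) NB @ period_with D (D + Wd - 1 - r) (0, {0}, {}) @
        period_with D ((K + 1) * Wd - r) (0, {1}, {}) @ cell_pow (period_cells D) (NB + M0)"
      unfolding F1_def e_def using offsets tp by (intro map_point_cell_window[OF j r vs]) simp_all
    moreover have "map F2 [e..<e + window_len] = cell_pow (period_cells D) (NB + M0) @ period_with D (D + j * Wd - 1 - r) (0, {0}, {}) @
        period_with D ((j + 1) * Wd - r) (0, {1}, {}) @ cell_pow (period_cells D) NB"
      unfolding F2_def e_def using offsets tp by (intro map_point_cell_window[OF j r vs]) simp_all
    ultimately show ?thesis using ef_equiv_window[OF _ classes j r] by simp
  qed
  have outside: "map F1 [1..<e] = map F2 [1..<e]" "map F1 [e + window_len..<len + 1] = map F2 [e + window_len..<len + 1]"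
  proof -
    have win: "u \<in> {e..<e + window_len}"
      if "u = e + m1 * D + a \<or> u = e + m1 * D + D + a" "a < D" "m1 \<le> NB + M0" for u m1 a
    proof -
      have "m1 * D + D + a < (m1 + 2) * D" using that(2) by simp
      also have "\<dots> \<le> window_len" unfolding window_len_def using that(3) by (intro mult_le_mono1) simp
      finally show ?thesis using that(1) by auto
    qed
    note tp' = tp[folded e_def]
    have pos: "pos_l j \<in> {e..<e + window_len}" "pos_r j \<in> {e..<e + window_len}"
      "neg_l j \<in> {e..<e + window_len}" "neg_r j \<in> {e..<e + window_len}"
      by (rule win[OF disjI1[OF tp'(1)] offsets(2)] win[OF disjI2[OF tp'(2)] offsets(4)]
        win[OF disjI1[OF tp'(3)] offsets(6)] win[OF disjI2[OF tp'(4)] offsets(8)]; simp)+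
    have "F1 p = F2 p" if "p \<notin> {e..<e + window_len}" for p
      unfolding F1_def F2_def using that pos by (intro point_cell_same) auto
    then show "map F1 [1..<e] = map F2 [1..<e]" "map F1 [e + window_len..<len + 1] = map F2 [e + window_len..<len + 1]"
      by (simp_all del: upt_Suc)
  qed
  have "[1..<len + 1] = [1..<e] @ [e..<e + window_len] @ [e + window_len..<len + 1]"
    using upt_append[of 1 e "len + 1"] upt_append[of e "e + window_len" "len + 1"] wb(1,2)
    unfolding e_def by (simp del: upt_Suc)
  moreover have "ef_equiv K1 K2 Q {..<length vs + 2} {}
      (map F1 [1..<e] @ map F1 [e..<e + window_len] @ map F1 [e + window_len..<len + 1])
      (map F2 [1..<e] @ map F2 [e..<e + window_len] @ map F2 [e + window_len..<len + 1])"
    unfolding outside by (intro ef_equiv_append ef_equiv_refl mid)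
  ultimately show ?thesis unfolding F1_def F2_def by (simp del: upt_Suc)
qed

end

section \<open>No fast consistent learner\<close>

context hard_instance begin

lemma ex_stripe_residue_avoiding:
  assumes "finite R" "card R \<le> G" "2 * G < Wd"
  shows "\<exists>r \<in> stripe j. r \<notin> R"
proof (rule ccontr)
  assume "\<not> ?thesis"
  then have "card (stripe j) \<le> G" using card_mono[OF assms(1)] assms(2) by fastforce
  then show False using card_stripe assms(3) width by simp
qed

lemma learner_output_not_consistent:
  assumes j: "j \<in> {1..K}" and r: "r \<in> stripe j" and vs: "set vs \<inter> region j = {}" "set vs \<subseteq> univ (word r)"
    and f: "qrank f \<le> Q" "has_vars f (length vs)" "length vs + 2 + Q \<le> K1" "Q \<le> K2"
    and classes: "card (ef_class K1 K2 {0,1} Q {..<length vs + 2} {} ` {m. admissible {0,1} {..<length vs + 2} {} m}) \<le> NB"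
  shows "\<not> consistent (word r) f vs train"
proof
  have "hyp (word r) f vs (pos_l j) (pos_r j) \<longleftrightarrow> hyp (word r) f vs (neg_l j) (neg_r j)"
    using train_pos_univ[OF j] vs(2) f
    by (intro ef_equiv_hyp[OF _ ef_equiv_pos_neg[OF j r vs(1) classes]]) (auto simp: word_def)
  moreover have "(pos_l j, pos_r j, True) \<in> train" "(neg_l j, neg_r j, False) \<in> train"
    using j by (auto simp: train_def)
  moreover assume "consistent (word r) f vs train"
  ultimately show False unfolding consistent_def by fastforce
qed


lemma run_outputs_unread_residue:
  assumes "r \<in> stripe j" "j \<in> {1..K}" and short: "length h \<le> G"
    and unread: "r \<notin> (\<lambda>p. p mod D) ` blank_queries A train len G" and run: "run_outputs A (word r) train h f vs"
  shows "A train (blank_run A train len G) = Output f vs"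
proof -
  have "blank_run A train len (length h) = h"
  proof (rule valid_run_short_eq_blank_run)
    show "valid_run A (word r) train h" using run by (simp add: run_outputs_def)
    fix p assume p: "p \<in> univ (word r)" "p \<in> blank_queries A train len G"
    then have "p mod D \<noteq> r" using unread by blast
    moreover have "1 \<le> p" "p \<le> len" using p(1) by (auto simp: univ_def)
    ultimately show "word r ! (p - 1) = 0" using nth_word[of p r] by (simp add: letter_def)
  qed (simp_all add: training_set_train short)
  then show ?thesis using run short blank_run_stable unfolding run_outputs_def by metis
qed

lemma no_fast_consistent_learner:
  fixes A :: algorithm
  assumes learner: "\<And>r. \<exists>j \<in> {1..K}. r \<in> stripe j \<Longrightarrow>
      \<exists>h f vs. run_outputs A (word r) train h f vs \<and> qrank f \<le> Q \<and> length vs \<le> Lb \<and>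
        has_vars f (length vs) \<and> consistent (word r) f vs train"
    and fast: "\<And>r h f vs. \<exists>j \<in> {1..K}. r \<in> stripe j \<Longrightarrow> run_outputs A (word r) train h f vs \<Longrightarrow>
      length h \<le> G"
    and G: "2 * G < Wd" and Lb: "Lb < K" and K1: "Lb + 2 + Q \<le> K1" and K2: "Q \<le> K2"
    and classes: "\<And>l. l \<le> Lb \<Longrightarrow>
      card (ef_class K1 K2 {0,1} Q {..<l + 2} {} ` {m. admissible {0,1} {..<l + 2} {} m}) \<le> NB"
  shows False
proof -
  define R where "R = (\<lambda>p. p mod D) ` blank_queries A train len G"
  have R: "finite R" "card R \<le> G"
    using finite_blank_queries card_blank_queries_le card_image_le le_trans unfolding R_def by blast+
  have blank: "A train (blank_run A train len G) = Output f vs"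
    if "r \<in> stripe j" "j \<in> {1..K}" "r \<notin> R" "run_outputs A (word r) train h f vs" for r j h f vs
    using run_outputs_unread_residue[OF that(1,2) _ _ that(4)] fast that unfolding R_def by blast
  obtain r1 where r1: "r1 \<in> stripe 1" "r1 \<notin> R" using ex_stripe_residue_avoiding[OF R G] by blast
  then obtain h1 f1 vs1 where out1: "run_outputs A (word r1) train h1 f1 vs1" "length vs1 \<le> Lb"
    using learner[of r1] K_pos by fastforce
  obtain j where j: "j \<in> {1..K}" "set vs1 \<inter> region j = {}"
    using ex_region_avoiding[of vs1] out1(2) Lb by auto
  obtain r where r: "r \<in> stripe j" "r \<notin> R" using ex_stripe_residue_avoiding[OF R G] by blast
  then obtain h f vs where out: "run_outputs A (word r) train h f vs" "qrank f \<le> Q" "length vs \<le> Lb"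
    "has_vars f (length vs)" "consistent (word r) f vs train"
    using learner[of r] j by blast
  have "1 \<in> {1..K}" using K_pos by simp
  from blank[OF r1(1) this r1(2) out1(1)] blank[OF r(1) j(1) r(2) out(1)] have "vs = vs1" by simp
  moreover have "set vs \<subseteq> univ (word r)" using out(5) by (simp add: consistent_def)
  ultimately have "\<not> consistent (word r) f vs train"
    using out(2-4) K1 K2 classes[OF out(3)] j r(1)
    by (intro learner_output_not_consistent) auto
  with out(5) show False by simp
qed

end

lemma sublinear_below_half:
  assumes "(\<lambda>n. g n / real n) \<longlonglongrightarrow> 0" "0 < C"
  obtains N0 where "\<And>W. N0 \<le> W \<Longrightarrow> g (C * W) < real W / 2"
proof -
  obtain N0 where N0: "\<And>m. N0 \<le> m \<Longrightarrow> norm (g m / real m - 0) < 1 / (2 * real C)"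
    using LIMSEQ_D[OF assms(1), of "1 / (2 * real C)"] assms(2) by auto
  have "g (C * W) < real W / 2" if W: "Suc N0 \<le> W" for W
  proof -
    have "W \<le> C * W" using assms(2) by simp
    then have "N0 \<le> C * W" using W by linarith
    then have "\<bar>g (C * W) / real (C * W)\<bar> < 1 / (2 * real C)" using N0 by (simp only: diff_zero real_norm_def)
    then have "g (C * W) / real (C * W) < 1 / (2 * real C)" by linarith
    moreover have "0 < real (C * W)" using W assms(2) by simp
    ultimately have "g (C * W) < 1 / (2 * real C) * real (C * W)" by (simp add: pos_divide_less_eq)
    also have "\<dots> = real W / 2" using assms(2) by simp
    finally show ?thesis .
  qed
  then show thesis using that by blast
qed

lemma ex_hard_instance_below_half:
  assumes "(\<lambda>n. g n / real n) \<longlonglongrightarrow> 0" "1 \<le> K"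
  obtains Wd where "hard_instance K Wd NB" "g (hard_instance.len K Wd NB) < real Wd / 2"
proof -
  define C where "C = (K + 1) * (2 * NB + fact NB + 4) * (K + 2)"
  have "0 < C" by (simp add: C_def)
  then obtain N0 where N0: "\<And>W. N0 \<le> W \<Longrightarrow> g (C * W) < real W / 2"
    using sublinear_below_half[OF assms(1)] by blast
  define Wd where "Wd = fact NB * (N0 + 4 * NB + 8)"
  interpret hard_instance K Wd NB
    using assms(2) by unfold_locales (auto simp: Wd_def intro: order_trans[OF _ mult_le_mono1[of 1 "fact NB"]])
  have "1 * (N0 + 4 * NB + 8) \<le> Wd" unfolding Wd_def by (rule mult_le_mono1) simp
  then have "N0 \<le> Wd" by simp
  moreover have "len = C * Wd" by (simp add: len_def C_def S_def D_def algebra_simps)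
  ultimately show thesis using that[OF hard_instance_axioms] N0 by simp
qed

lemma no_fast_consistent_learner_phi:
  assumes "consistent_formula_learner {0, 1} phi A" "sublinear_time {0, 1} phi A"
  shows False
proof -
  from assms(1) obtain Q Lb where learner: "\<And>w T. set w \<subseteq> {0, 1} \<Longrightarrow> training_set w T \<Longrightarrow> phi_consistent w phi 1 T \<Longrightarrow>
      \<exists>h f vs. run_outputs A w T h f vs \<and> qrank f \<le> Q \<and> length vs \<le> Lb \<and> has_vars f (length vs) \<and> consistent w f vs T"
    unfolding consistent_formula_learner_def by blast
  define K where "K = Lb + 1"
  define NB where "NB = (\<Sum>l\<le>Lb. card (ef_class (Lb + 2 + Q) Q {0, 1} Q {..<l + 2} {} ` {m. admissible {0, 1} {..<l + 2} {} m}))"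
  from assms(2) obtain g where glim: "(\<lambda>n. g n / real n) \<longlonglongrightarrow> 0" and fast: "\<And>w T. set w \<subseteq> {0, 1} \<Longrightarrow>
      training_set w T \<Longrightarrow> phi_consistent w phi 1 T \<Longrightarrow> card T \<le> 2 * K \<Longrightarrow>
      \<exists>h f vs. run_outputs A w T h f vs \<and> real (length h) \<le> g (length w)"
    unfolding sublinear_time_def by meson
  have "1 \<le> K" by (simp add: K_def)
  with glim obtain Wd where "hard_instance K Wd NB" and gW: "g (hard_instance.len K Wd NB) < real Wd / 2"
    by (rule ex_hard_instance_below_half)
  then interpret hard_instance K Wd NB by simp
  define G where "G = nat \<lfloor>g len\<rfloor>"
  show False
  proof (rule no_fast_consistent_learner[where G = G and ?K1.0 = "Lb + 2 + Q" and ?K2.0 = Q])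
    fix r assume "\<exists>j \<in> {1..K}. r \<in> stripe j"
    then obtain j where "j \<in> {1..K}" "r \<in> stripe j" by blast
    from learner[OF set_word training_set_train phi_consistent_train[OF this]]
    show "\<exists>h f vs. run_outputs A (word r) train h f vs \<and> qrank f \<le> Q \<and> length vs \<le> Lb \<and>
        has_vars f (length vs) \<and> consistent (word r) f vs train" .
  next
    fix r h f vs assume "\<exists>j \<in> {1..K}. r \<in> stripe j" and run: "run_outputs A (word r) train h f vs"
    then obtain j where "j \<in> {1..K}" "r \<in> stripe j" by blast
    from fast[OF set_word training_set_train phi_consistent_train[OF this] card_train_le]
    obtain h' f' vs' where "run_outputs A (word r) train h' f' vs'" "real (length h') \<le> g len"
      by auto
    then show "length h \<le> G" using run_outputs_unique[OF run] unfolding G_def by (simp add: le_nat_floor)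
  next
    have "real G \<le> max 0 (g len)" unfolding G_def by linarith
    then show "2 * G < Wd" using gW width by simp
  next
    fix l assume "l \<le> Lb"
    then show "card (ef_class (Lb + 2 + Q) Q {0, 1} Q {..<l + 2} {} ` {m. admissible {0, 1} {..<l + 2} {} m}) \<le> NB"
      unfolding NB_def by (intro member_le_sum) auto
  qed (simp_all add: K_def)
qed

theorem theorem8:
  shows "\<exists>(\<Sigma>::nat set) \<phi>. finite \<Sigma> \<and> existential_fo_1param \<phi> \<and>
           \<not> (\<exists>A. consistent_formula_learner \<Sigma> \<phi> A \<and> sublinear_time \<Sigma> \<phi> A)"
  using existential_fo_1param_phi no_fast_consistent_learner_phi
  by (intro exI[of _ "{0, 1}"] exI[of _ phi]) blast

end
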